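(* Let $\sigma>0$, $\bar\gamma>0$, $c_\infty\ge0$, and for $\gamma\in(0,\bar\gamma]$ let $\tau_\gamma:[0,\infty)\to[0,\infty)$ be non-decreasing with $\tau_\gamma(0)=0$, such that there exist $R_1,L\ge0$, $m>0$ with $\sup_{r>0}\tau_\gamma(r)/r\le1+\gamma L$ and $\sup_{r>R_1}\tau_\gamma(r)/r\le1-\gamma m$ for all $\gamma\in(0,\bar\gamma]$. Let $Q_\gamma$ be the Markov kernel on $[0,\infty)$ $$Q_\gamma(w,A)=\delta_0(A)\int_{\mathbb{R}}\bar p_{\sigma^2\gamma}(\tau_\gamma(w)+\gamma c_\infty,g)\varphi(g)dg+\int_{\mathbb{R}}\mathbb{1}_A(\tau_\gamma(w)+\gamma c_\infty-2\sigma\gamma^{1/2}g)\{1-\bar p_{\sigma^2\gamma}(\tau_\gamma(w)+\gamma c_\infty,g)\}\varphi(g)dg,$$ with $\bar p_{\sigma^2\gamma}(a,g)=1\wedge\varphi_{\sigma^2\gamma}(a-\sigma\sqrt\gamma g)/\varphi_{\sigma^2\gamma}(\sigma\sqrt\gamma g)$. Then for every $\gamma\in(0,\bar\gamma]$, $Q_\gamma$ admits a unique invariant probability measure $\mu_\gamma$ and is geometrically ergodic. Moreover $\mu_\gamma(\{0\})>0$ and $\mu_\gamma$ is absolutely continuous with respect to $\delta_0+\mathrm{Leb}$ on $[0,\infty)$. Finally, if $c_\infty\ne0$, then $\mu_\gamma$ and $\delta_0+\mathrm{Leb}$ are equivalent (mutually absolutely continuous).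
   Context: $\varphi$ is the standard normal density and $\varphi_s(t)=(2\pi s)^{-1/2}e^{-t^2/(2s)}$; Leb is Lebesgue measure on $[0,\infty)$. *)

theory Defs
  imports "HOL-Probability.Probability"
begin

definition phi :: "real \<Rightarrow> real" where
  "phi t = exp (- t\<^sup>2 / 2) / sqrt (2 * pi)"

definition phi_var :: "real \<Rightarrow> real \<Rightarrow> real" where
  "phi_var s t = exp (- t\<^sup>2 / (2 * s)) / sqrt (2 * pi * s)"

definition pbar :: "real \<Rightarrow> real \<Rightarrow> real \<Rightarrow> real \<Rightarrow> real" where
  "pbar \<sigma> \<gamma> a g =
     min 1 (phi_var (\<sigma>\<^sup>2 * \<gamma>) (a - \<sigma> * sqrt \<gamma> * g) / phi_var (\<sigma>\<^sup>2 * \<gamma>) (\<sigma> * sqrt \<gamma> * g))"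

definition state_space :: "real measure" where
  "state_space = restrict_space borel {0..}"

definition Qfun :: "real \<Rightarrow> real \<Rightarrow> (real \<Rightarrow> real \<Rightarrow> real) \<Rightarrow> real \<Rightarrow> real \<Rightarrow> real set \<Rightarrow> real" where
  "Qfun \<sigma> c \<tau> \<gamma> w A =
     (let a = \<tau> \<gamma> w + \<gamma> * c in
        indicator A 0 * (LINT g|lborel. pbar \<sigma> \<gamma> a g * phi g)
      + (LINT g|lborel. indicator A (a - 2 * \<sigma> * sqrt \<gamma> * g) * (1 - pbar \<sigma> \<gamma> a g) * phi g))"

definition Qmeas :: "real \<Rightarrow> real \<Rightarrow> (real \<Rightarrow> real \<Rightarrow> real) \<Rightarrow> real \<Rightarrow> real \<Rightarrow> real measure" where
  "Qmeas \<sigma> c \<tau> \<gamma> w =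
     measure_of {0..} (sets state_space) (\<lambda>A. ennreal (Qfun \<sigma> c \<tau> \<gamma> w A))"

fun Qpow :: "real \<Rightarrow> real \<Rightarrow> (real \<Rightarrow> real \<Rightarrow> real) \<Rightarrow> real \<Rightarrow> nat \<Rightarrow> real \<Rightarrow> real set \<Rightarrow> real" where
  "Qpow \<sigma> c \<tau> \<gamma> 0 w A = indicator A w"
| "Qpow \<sigma> c \<tau> \<gamma> (Suc n) w A = (LINT y|Qmeas \<sigma> c \<tau> \<gamma> w. Qpow \<sigma> c \<tau> \<gamma> n y A)"

definition invariant_prob :: "real \<Rightarrow> real \<Rightarrow> (real \<Rightarrow> real \<Rightarrow> real) \<Rightarrow> real \<Rightarrow> real measure \<Rightarrow> bool" where
  "invariant_prob \<sigma> c \<tau> \<gamma> \<mu> \<longleftrightarrow>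
     sets \<mu> = sets state_space \<and> prob_space \<mu> \<and>
     (\<forall>A \<in> sets state_space.
        emeasure \<mu> A = (\<integral>\<^sup>+ w. emeasure (Qmeas \<sigma> c \<tau> \<gamma> w) A \<partial>\<mu>))"

definition tv_dist :: "real \<Rightarrow> real \<Rightarrow> (real \<Rightarrow> real \<Rightarrow> real) \<Rightarrow> real \<Rightarrow> real measure \<Rightarrow> nat \<Rightarrow> real \<Rightarrow> real" where
  "tv_dist \<sigma> c \<tau> \<gamma> \<mu> n w =
     (SUP A \<in> sets state_space. \<bar>Qpow \<sigma> c \<tau> \<gamma> n w A - measure \<mu> A\<bar>)"

definition geom_ergodic :: "real \<Rightarrow> real \<Rightarrow> (real \<Rightarrow> real \<Rightarrow> real) \<Rightarrow> real \<Rightarrow> real measure \<Rightarrow> bool" where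
  "geom_ergodic \<sigma> c \<tau> \<gamma> \<mu> \<longleftrightarrow>
     (\<exists>\<rho>::real. 0 \<le> \<rho> \<and> \<rho> < 1 \<and>
        (\<exists>C :: real \<Rightarrow> real. \<forall>w \<ge> 0. \<forall>n. tv_dist \<sigma> c \<tau> \<gamma> \<mu> n w \<le> C w * \<rho> ^ n))"

definition ref_meas :: "real measure" where
  "ref_meas = measure_of {0..} (sets state_space) (\<lambda>A. indicator A 0 + emeasure lborel A)"

end

theory Submission
  imports Defs
begin

(* From w the chain proposes a - 2 \<sigma> sqrt \<gamma> g, with g standard normal and a = \<tau>_\<gamma>(w) + \<gamma> c_inf,
   and is sent to 0 instead with probability pbar(a, g), certainly so when the proposal is negative.
   Hence V(w) = w is a Lyapunov function: the mean of Q_\<gamma>(w, .) is at most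
   a + 2 \<sigma> sqrt \<gamma> \<le> (1 - \<gamma> m) w + K for a constant K. Moreover the atom 0 is reached uniformly
   from each sublevel set [0, R], since from w \<le> R every proposal g \<ge> t is rejected. Harris'
   theorem, in the form of Hairer and Mattingly, makes Q_\<gamma> a strict contraction for the distance
   2 + \<beta> (x + y); so the laws Q_\<gamma>^n(0, .) converge setwise, geometrically fast, to a probability
   measure \<mu>_\<gamma>, which is invariant, the only invariant one, and charges {0}. Each Q_\<gamma>(w, .) is absolutely continuous with
   respect to \<delta>_0 + Leb, hence so is \<mu>_\<gamma> = \<mu>_\<gamma> Q_\<gamma>. Conversely \<mu>_\<gamma> \<ge> \<mu>_\<gamma>{0} Q_\<gamma>(0, .), and
   for c_inf > 0 the proposals from 0 charge every Lebesgue-positive subset of (0, \<infinity>). *)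

section \<open>The Gaussian density and the acceptance probability\<close>

lemma phi_eq_std_normal_density: "phi = std_normal_density"
  by (simp add: fun_eq_iff phi_def std_normal_density_def)

lemma phi_pos: "0 < phi g"
  by (simp add: phi_def)

lemma phi_nonneg [simp]: "0 \<le> phi g"
  using phi_pos less_imp_le by blast

lemma phi_antimono: "0 \<le> g \<Longrightarrow> g \<le> h \<Longrightarrow> phi h \<le> phi g"
  unfolding phi_def by (intro divide_right_mono) (auto intro!: power_mono)

lemma borel_measurable_phi [measurable]: "phi \<in> borel_measurable borel"
  unfolding phi_def by measurable

lemma integrable_phi: "integrable lborel phi"
  by (simp add: phi_eq_std_normal_density)

lemma integral_phi: "(\<integral>g. phi g \<partial>lborel) = 1"
  by (simp add: phi_eq_std_normal_density)

lemma nn_integral_phi: "(\<integral>\<^sup>+g. ennreal (phi g) \<partial>lborel) = 1"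
  by (subst nn_integral_eq_integral) (auto simp: integrable_phi integral_phi)

lemma integrable_phi_abs: "integrable lborel (\<lambda>g. phi g * \<bar>g\<bar>)"
  using integrable_std_normal_moment_abs[of 1] by (simp add: phi_eq_std_normal_density)

lemma integral_phi_abs_le_1: "(\<integral>g. phi g * \<bar>g\<bar> \<partial>lborel) \<le> 1"
proof -
  have "(\<integral>g. phi g * \<bar>g\<bar> \<partial>lborel) = sqrt (2 / pi)"
    using integral_std_normal_moment_abs_odd[of 0] by (simp add: phi_eq_std_normal_density)
  also have "\<dots> \<le> 1"
    using pi_gt3 by (simp add: divide_le_eq)
  finally show ?thesis .
qed

lemma pbar_eq_min_exp:
  assumes "\<sigma> > 0" "\<gamma> > 0"
  shows "pbar \<sigma> \<gamma> a g = min 1 (exp (a * (2 * \<sigma> * sqrt \<gamma> * g - a) / (2 * (\<sigma>\<^sup>2 * \<gamma>))))"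
proof -
  define v where "v = \<sigma>\<^sup>2 * \<gamma>"
  have v: "v > 0"
    using assms by (simp add: v_def)
  have "phi_var v (a - \<sigma> * sqrt \<gamma> * g) / phi_var v (\<sigma> * sqrt \<gamma> * g)
      = exp (- (a - \<sigma> * sqrt \<gamma> * g)\<^sup>2 / (2 * v)) / exp (- (\<sigma> * sqrt \<gamma> * g)\<^sup>2 / (2 * v))"
    using v by (simp add: phi_var_def)
  also have "\<dots> = exp (- (a - \<sigma> * sqrt \<gamma> * g)\<^sup>2 / (2 * v) - (- (\<sigma> * sqrt \<gamma> * g)\<^sup>2 / (2 * v)))"
    by (rule exp_diff[symmetric])
  also have "- (a - \<sigma> * sqrt \<gamma> * g)\<^sup>2 / (2 * v) - (- (\<sigma> * sqrt \<gamma> * g)\<^sup>2 / (2 * v))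
      = a * (2 * \<sigma> * sqrt \<gamma> * g - a) / (2 * v)"
    using v by (simp add: field_simps power2_eq_square)
  finally show ?thesis
    unfolding pbar_def v_def by simp
qed

lemma pbar_nonneg: "\<sigma> > 0 \<Longrightarrow> \<gamma> > 0 \<Longrightarrow> 0 \<le> pbar \<sigma> \<gamma> a g"
  by (simp add: pbar_eq_min_exp)

lemma pbar_le_1: "pbar \<sigma> \<gamma> a g \<le> 1"
  by (simp add: pbar_def)

lemma pbar_eq_1:
  assumes "\<sigma> > 0" "\<gamma> > 0" "0 \<le> a" "a \<le> 2 * \<sigma> * sqrt \<gamma> * g"
  shows "pbar \<sigma> \<gamma> a g = 1"
proof -
  have "0 \<le> a * (2 * \<sigma> * sqrt \<gamma> * g - a)"
    using assms by simp
  then have "0 \<le> a * (2 * \<sigma> * sqrt \<gamma> * g - a) / (2 * (\<sigma>\<^sup>2 * \<gamma>))"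
    using assms by simp
  then show ?thesis
    using assms by (simp add: pbar_eq_min_exp)
qed

lemma pbar_less_1:
  assumes "\<sigma> > 0" "\<gamma> > 0" "0 < a" "2 * \<sigma> * sqrt \<gamma> * g < a"
  shows "pbar \<sigma> \<gamma> a g < 1"
proof -
  have "a * (2 * \<sigma> * sqrt \<gamma> * g - a) < 0"
    using assms by (simp add: mult_pos_neg)
  then show ?thesis
    using assms by (simp add: pbar_eq_min_exp divide_neg_pos)
qed

lemma borel_measurable_pbar_pair [measurable]:
  "(\<lambda>x. pbar \<sigma> \<gamma> (fst x) (snd x)) \<in> borel_measurable (borel \<Otimes>\<^sub>M borel)"
  unfolding pbar_def phi_var_def by measurable

lemma borel_measurable_pbar [measurable]: "pbar \<sigma> \<gamma> a \<in> borel_measurable borel"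
  unfolding pbar_def phi_var_def by measurable

lemma floor_eq_card:
  fixes s :: real
  assumes "0 \<le> s" "s \<le> real k"
  shows "real_of_int \<lfloor>s\<rfloor> = real (card {j \<in> {1..k}. real j \<le> s})"
proof -
  have iff: "real j \<le> s \<longleftrightarrow> j \<le> nat \<lfloor>s\<rfloor>" for j
    using assms by (simp add: le_nat_iff le_floor_iff)
  have "nat \<lfloor>s\<rfloor> \<le> k"
    using assms by (simp add: nat_le_iff floor_le_iff)
  then have "{j \<in> {1..k}. real j \<le> s} = {1..nat \<lfloor>s\<rfloor>}"
    unfolding iff by fastforce
  then show ?thesis
    using assms by simp
qed

lemma integral_staircase_approx:
  fixes h :: "'a \<Rightarrow> real"
  assumes M: "prob_space M" and h: "h \<in> borel_measurable M"
    and h01: "\<And>x. x \<in> space M \<Longrightarrow> 0 \<le> h x \<and> h x \<le> 1" and k: "0 < k"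
  shows "\<bar>(\<integral>x. h x \<partial>M) - (\<Sum>j\<in>{1..k}. measure M {x \<in> space M. real j \<le> real k * h x}) / real k\<bar>
    \<le> 1 / real k"
proof -
  interpret prob_space M by fact
  define B where "B j = {x \<in> space M. real j \<le> real k * h x}" for j :: nat
  define stair where "stair x = (\<Sum>j\<in>{1..k}. indicator (B j) x) / real k" for x
  have [measurable]: "B j \<in> sets M" for j
    unfolding B_def using h by measurable
  have approx: "\<bar>h x - stair x\<bar> \<le> 1 / real k" if x: "x \<in> space M" for x
  proof -
    have "(\<Sum>j\<in>{1..k}. indicator (B j) x) = real (card {j \<in> {1..k}. real j \<le> real k * h x})"
      using x by (simp add: B_def indicator_def sum.If_cases Int_def)
    also have "\<dots> = real_of_int \<lfloor>real k * h x\<rfloor>"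
      using h01[OF x] by (intro floor_eq_card[symmetric]) (auto simp: mult_left_le)
    finally have "real k * stair x = real_of_int \<lfloor>real k * h x\<rfloor>"
      using k by (simp add: stair_def)
    then have "\<bar>real k * h x - real k * stair x\<bar> \<le> 1"
      by linarith
    then have "real k * \<bar>h x - stair x\<bar> \<le> 1"
      using k by (simp add: right_diff_distrib[symmetric] abs_mult)
    then show ?thesis
      using k by (simp add: le_divide_eq mult.commute)
  qed
  have int_h: "integrable M h"
    using h h01 by (intro integrable_const_bound[where B = 1]) auto
  have int_stair: "integrable M stair"
    unfolding stair_def by (intro integrable_divide Bochner_Integration.integrable_sum integrable_real_indicator)
      (auto simp: less_top[symmetric])
  have "(\<integral>x. stair x \<partial>M) = (\<Sum>j\<in>{1..k}. measure M (B j)) / real k"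
    unfolding stair_def integral_divide_zero
    by (subst Bochner_Integration.integral_sum) (auto simp: less_top[symmetric])
  moreover have "\<bar>\<integral>x. h x - stair x \<partial>M\<bar> \<le> (\<integral>x. \<bar>h x - stair x\<bar> \<partial>M)"
    using integral_norm_bound[of M "\<lambda>x. h x - stair x"] by simp
  moreover have "\<dots> \<le> (\<integral>x. 1 / real k \<partial>M)"
    using int_h int_stair approx by (intro integral_mono integrable_abs) auto
  ultimately show ?thesis
    using int_h int_stair by (simp add: B_def prob_space)
qed

lemma integral_diff_le_of_measure_diff_le:
  fixes h :: "'a \<Rightarrow> real"
  assumes M: "prob_space M" and N: "prob_space N" and sets_N: "sets N = sets M"
    and diff: "\<And>B. B \<in> sets M \<Longrightarrow> \<bar>measure M B - measure N B\<bar> \<le> \<epsilon>"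
    and h: "h \<in> borel_measurable M" and h01: "\<And>x. x \<in> space M \<Longrightarrow> 0 \<le> h x \<and> h x \<le> 1"
  shows "\<bar>(\<integral>x. h x \<partial>M) - (\<integral>x. h x \<partial>N)\<bar> \<le> \<epsilon>"
proof (rule field_le_epsilon)
  fix e :: real
  assume "0 < e"
  then obtain k :: nat where "2 / e < real k"
    using reals_Archimedean2 by blast
  moreover from this \<open>0 < e\<close> have "0 < real k"
    by (smt (verit) divide_pos_pos)
  ultimately have k: "0 < k" "2 / real k < e"
    using \<open>0 < e\<close> by (auto simp: field_simps)
  define B where "B j = {x \<in> space M. real j \<le> real k * h x}" for j :: nat
  have B: "B j \<in> sets M" for j
    unfolding B_def using h by measurable
  have space_N: "space N = space M"
    using sets_eq_imp_space_eq[OF sets_N] .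
  have "\<bar>(\<integral>x. h x \<partial>M) - (\<Sum>j\<in>{1..k}. measure M (B j)) / real k\<bar> \<le> 1 / real k"
    using integral_staircase_approx[OF M h h01 k(1)] by (simp add: B_def)
  moreover have "\<bar>(\<integral>x. h x \<partial>N) - (\<Sum>j\<in>{1..k}. measure N (B j)) / real k\<bar> \<le> 1 / real k"
    using integral_staircase_approx[OF N _ _ k(1), of h] h h01
    by (simp add: B_def space_N measurable_cong_sets[OF sets_N refl])
  moreover have "\<bar>(\<Sum>j\<in>{1..k}. measure M (B j)) - (\<Sum>j\<in>{1..k}. measure N (B j))\<bar>
      \<le> (\<Sum>j\<in>{1..k}. \<bar>measure M (B j) - measure N (B j)\<bar>)"
    unfolding sum_subtractf[symmetric] by (rule sum_abs)
  moreover have "\<dots> \<le> real k * \<epsilon>"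
    using sum_mono[of "{1..k}", OF diff[OF B]] by simp
  ultimately have "\<bar>(\<integral>x. h x \<partial>M) - (\<integral>x. h x \<partial>N)\<bar> \<le> \<epsilon> + 2 / real k"
    using k by (simp add: abs_le_iff field_simps)
  then show "\<bar>(\<integral>x. h x \<partial>M) - (\<integral>x. h x \<partial>N)\<bar> \<le> \<epsilon> + e"
    using k by linarith
qed

lemma integral_le_of_nn_integral_le:
  fixes f :: "'a \<Rightarrow> real"
  assumes f: "f \<in> borel_measurable M" and nonneg: "\<And>x. x \<in> space M \<Longrightarrow> 0 \<le> f x"
    and le: "(\<integral>\<^sup>+x. ennreal (f x) \<partial>M) \<le> ennreal c" and c: "0 \<le> c"
  shows "integrable M f" "(\<integral>x. f x \<partial>M) \<le> c"
proof -
  show int: "integrable M f"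
    using f nonneg le by (intro integrableI_nonneg) (auto intro!: AE_I2 le_less_trans[OF _ ennreal_less_top])
  have "ennreal (\<integral>x. f x \<partial>M) \<le> ennreal c"
    using le nonneg by (subst nn_integral_eq_integral[symmetric, OF int]) (auto intro: AE_I2)
  then show "(\<integral>x. f x \<partial>M) \<le> c"
    using c by simp
qed

lemma exists_center:
  fixes h W :: "'a \<Rightarrow> real"
  assumes "S \<noteq> {}" and osc: "\<And>z z'. z \<in> S \<Longrightarrow> z' \<in> S \<Longrightarrow> \<bar>h z - h z'\<bar> \<le> W z + W z'"
  shows "\<exists>c. \<forall>z\<in>S. \<bar>h z - c\<bar> \<le> W z"
proof -
  obtain z0 where z0: "z0 \<in> S"
    using assms(1) by blast
  have le: "h z' - W z' \<le> h z + W z" if "z \<in> S" "z' \<in> S" for z z'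
    using osc[OF that(2,1)] by (simp add: abs_le_iff)
  define c where "c = (SUP z\<in>S. h z - W z)"
  have lower: "h z - W z \<le> c" if "z \<in> S" for z
    unfolding c_def using that le[OF z0] by (intro cSUP_upper bdd_aboveI2)
  have upper: "c \<le> h z + W z" if "z \<in> S" for z
    unfolding c_def using assms(1) le[OF that] by (intro cSUP_least)
  have "\<bar>h z - c\<bar> \<le> W z" if "z \<in> S" for z
    using lower[OF that] upper[OF that] by linarith
  then show ?thesis
    by blast
qed

lemma nn_integral_emeasure_eq_integral_measure:
  assumes "prob_space \<nu>" and K: "K \<in> \<nu> \<rightarrow>\<^sub>M subprob_algebra N"
    and prob_K: "\<And>w. w \<in> space \<nu> \<Longrightarrow> prob_space (K w)" and A: "A \<in> sets N"
  shows "(\<integral>\<^sup>+w. emeasure (K w) A \<partial>\<nu>) = ennreal (\<integral>w. measure (K w) A \<partial>\<nu>)"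
proof -
  interpret prob_space \<nu> by fact
  have "(\<integral>\<^sup>+w. emeasure (K w) A \<partial>\<nu>) = (\<integral>\<^sup>+w. ennreal (measure (K w) A) \<partial>\<nu>)"
    using prob_K by (intro nn_integral_cong) (simp add: finite_measure.emeasure_eq_measure[OF prob_space.axioms(1)])
  also have "\<dots> = ennreal (\<integral>w. measure (K w) A \<partial>\<nu>)"
    using measurable_compose[OF K measurable_measure_subprob_algebra[OF A]] prob_K
    by (intro nn_integral_eq_integral integrable_const_bound[where B = 1]) (auto intro!: AE_I2 prob_space.prob_le_1)
  finally show ?thesis .
qed

section \<open>The one-step law\<close>

lemma space_state_space [simp]: "space state_space = {0..}"
  by (simp add: state_space_def)

lemma sets_state_space_iff: "B \<in> sets state_space \<longleftrightarrow> B \<subseteq> {0..} \<and> B \<in> sets borel"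
  unfolding state_space_def by (rule sets_restrict_space_iff) simp

lemma borel_measurable_state_space_ident [measurable]:
  "(\<lambda>y::real. y) \<in> borel_measurable state_space"
  unfolding state_space_def by (rule measurable_restrict_space1) simp

(* Q_\<gamma>(w, .) with a = \<tau>_\<gamma>(w) + \<gamma> c_inf, realised as a push-forward, which makes it a measure
   by construction: a Gaussian g comes with a flag that sends the chain to 0 with probability pbar
   and otherwise moves it to a - 2 \<sigma> sqrt \<gamma> g. The truncation at 0 is invisible, since pbar = 1
   wherever a - 2 \<sigma> sqrt \<gamma> g < 0 (lemma pbar_eq_1). *)
definition step_weight :: "real \<Rightarrow> real \<Rightarrow> real \<Rightarrow> real \<times> bool \<Rightarrow> ennreal" where
  "step_weight \<sigma> \<gamma> a x =
     ennreal ((if snd x then pbar \<sigma> \<gamma> a (fst x) else 1 - pbar \<sigma> \<gamma> a (fst x)) * phi (fst x))"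

definition step_target :: "real \<Rightarrow> real \<Rightarrow> real \<Rightarrow> real \<times> bool \<Rightarrow> real" where
  "step_target \<sigma> \<gamma> a x = (if snd x then 0 else max 0 (a - 2 * \<sigma> * sqrt \<gamma> * fst x))"

definition step_law :: "real \<Rightarrow> real \<Rightarrow> real \<Rightarrow> real measure" where
  "step_law \<sigma> \<gamma> a =
     distr (density (lborel \<Otimes>\<^sub>M count_space UNIV) (step_weight \<sigma> \<gamma> a)) state_space (step_target \<sigma> \<gamma> a)"

lemma sets_step_law [simp]: "sets (step_law \<sigma> \<gamma> a) = sets state_space"
  by (simp add: step_law_def)

lemma space_step_law [simp]: "space (step_law \<sigma> \<gamma> a) = {0..}"
  by (simp add: step_law_def)

lemma nn_integral_step_law:
  assumes f: "f \<in> borel_measurable state_space"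
  shows "(\<integral>\<^sup>+y. f y \<partial>step_law \<sigma> \<gamma> a) =
    (\<integral>\<^sup>+g. ennreal (pbar \<sigma> \<gamma> a g * phi g) * f 0
          + ennreal ((1 - pbar \<sigma> \<gamma> a g) * phi g) * f (max 0 (a - 2 * \<sigma> * sqrt \<gamma> * g)) \<partial>lborel)"
proof -
  interpret pair_sigma_finite lborel "count_space (UNIV :: bool set)"
    by (intro pair_sigma_finite.intro sigma_finite_lborel sigma_finite_measure_count_space_finite) simp
  have target: "step_target \<sigma> \<gamma> a \<in> lborel \<Otimes>\<^sub>M count_space UNIV \<rightarrow>\<^sub>M state_space"
    unfolding state_space_def step_target_def
    by (rule measurable_restrict_space2) auto
  have sets_eq: "sets (lborel \<Otimes>\<^sub>M count_space UNIV) = sets (borel \<Otimes>\<^sub>M count_space (UNIV :: bool set))"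
    by (intro sets_pair_measure_cong) simp_all
  have weight: "step_weight \<sigma> \<gamma> a \<in> borel_measurable (lborel \<Otimes>\<^sub>M count_space UNIV)"
    unfolding step_weight_def measurable_cong_sets[OF sets_eq refl] by measurable
  have f_target: "(\<lambda>x. f (step_target \<sigma> \<gamma> a x)) \<in> borel_measurable (lborel \<Otimes>\<^sub>M count_space UNIV)"
    using measurable_compose[OF target f] .
  have "(\<integral>\<^sup>+y. f y \<partial>step_law \<sigma> \<gamma> a)
      = (\<integral>\<^sup>+x. step_weight \<sigma> \<gamma> a x * f (step_target \<sigma> \<gamma> a x) \<partial>(lborel \<Otimes>\<^sub>M count_space UNIV))"
    unfolding step_law_def using target f f_target weight
    by (simp add: nn_integral_distr nn_integral_density)
  also have "\<dots> = (\<integral>\<^sup>+g. \<integral>\<^sup>+b. step_weight \<sigma> \<gamma> a (g, b) * f (step_target \<sigma> \<gamma> a (g, b))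
                      \<partial>count_space UNIV \<partial>lborel)"
    using f_target weight by (intro M2.nn_integral_fst[symmetric]) (simp add: measurable_cong_sets[OF sets_eq refl])
  finally show ?thesis
    by (simp add: nn_integral_count_space_finite UNIV_bool step_weight_def step_target_def add.commute)
qed

context
  fixes \<sigma> \<gamma> :: real
  assumes \<sigma>: "\<sigma> > 0" and \<gamma>: "\<gamma> > 0"
begin

lemma emeasure_step_law:
  assumes "B \<in> sets state_space"
  shows "emeasure (step_law \<sigma> \<gamma> a) B =
    (\<integral>\<^sup>+g. ennreal (pbar \<sigma> \<gamma> a g * phi g) * indicator B 0
          + ennreal ((1 - pbar \<sigma> \<gamma> a g) * phi g) * indicator B (max 0 (a - 2 * \<sigma> * sqrt \<gamma> * g)) \<partial>lborel)"
  using nn_integral_step_law[of "indicator B" \<sigma> \<gamma> a] assms by simp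

lemma prob_space_step_law: "prob_space (step_law \<sigma> \<gamma> a)"
proof
  have "ennreal (pbar \<sigma> \<gamma> a g * phi g) + ennreal ((1 - pbar \<sigma> \<gamma> a g) * phi g)
      = ennreal (pbar \<sigma> \<gamma> a g * phi g + (1 - pbar \<sigma> \<gamma> a g) * phi g)" for g
    by (rule ennreal_plus[symmetric]) (simp_all add: pbar_nonneg[OF \<sigma> \<gamma>] pbar_le_1)
  also have "pbar \<sigma> \<gamma> a g * phi g + (1 - pbar \<sigma> \<gamma> a g) * phi g = phi g" for g
    by (simp add: algebra_simps)
  finally have "ennreal (pbar \<sigma> \<gamma> a g * phi g) + ennreal ((1 - pbar \<sigma> \<gamma> a g) * phi g) = ennreal (phi g)"
    for g .
  then show "emeasure (step_law \<sigma> \<gamma> a) (space (step_law \<sigma> \<gamma> a)) = 1"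
    by (simp add: emeasure_step_law sets_state_space_iff nn_integral_phi)
qed

lemma step_law_measurable:
  "(\<lambda>a. step_law \<sigma> \<gamma> a) \<in> borel \<rightarrow>\<^sub>M subprob_algebra state_space"
proof (rule measurable_subprob_algebra)
  show "subprob_space (step_law \<sigma> \<gamma> a)" for a
    using prob_space_step_law by (rule prob_space_imp_subprob_space)
next
  fix B
  assume B: "B \<in> sets state_space"
  then have [measurable]: "B \<in> sets borel"
    by (simp add: sets_state_space_iff)
  show "(\<lambda>a. emeasure (step_law \<sigma> \<gamma> a) B) \<in> borel_measurable borel"
    unfolding emeasure_step_law[OF B] by measurable
qed simp

lemma emeasure_step_law_eq_integral:
  assumes a: "0 \<le> a" and B: "B \<in> sets state_space"
  shows "emeasure (step_law \<sigma> \<gamma> a) B = ennreal (indicator B 0 * (\<integral>g. pbar \<sigma> \<gamma> a g * phi g \<partial>lborel)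
    + (\<integral>g. indicator B (a - 2 * \<sigma> * sqrt \<gamma> * g) * (1 - pbar \<sigma> \<gamma> a g) * phi g \<partial>lborel))"
proof -
  have [measurable]: "B \<in> sets borel"
    using B by (simp add: sets_state_space_iff)
  define f0 where "f0 g = indicator B 0 * (pbar \<sigma> \<gamma> a g * phi g)" for g
  define f1 where "f1 g = indicator B (a - 2 * \<sigma> * sqrt \<gamma> * g) * (1 - pbar \<sigma> \<gamma> a g) * phi g" for g
  have f_nonneg: "0 \<le> f0 g" "0 \<le> f1 g" for g
    by (simp_all add: f0_def f1_def pbar_nonneg[OF \<sigma> \<gamma>] pbar_le_1)
  have f_le_phi: "f0 g \<le> phi g" "f1 g \<le> phi g" for g
    by (auto simp: f0_def f1_def indicator_def pbar_nonneg[OF \<sigma> \<gamma>] pbar_le_1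
             intro!: mult_left_le_one_le)
  have [measurable]: "f0 \<in> borel_measurable borel"
    unfolding f0_def by measurable
  have [measurable]: "f1 \<in> borel_measurable borel"
    unfolding f1_def by measurable
  have integrable: "integrable lborel f0" "integrable lborel f1"
    using f_nonneg f_le_phi
    by (auto intro!: Bochner_Integration.integrable_bound[OF integrable_phi])
  have truncation: "indicator B (max 0 (a - 2 * \<sigma> * sqrt \<gamma> * g)) * (1 - pbar \<sigma> \<gamma> a g) * phi g = f1 g"
    for g
  proof (cases "0 \<le> a - 2 * \<sigma> * sqrt \<gamma> * g")
    case False
    then have "pbar \<sigma> \<gamma> a g = 1"
      using a by (intro pbar_eq_1[OF \<sigma> \<gamma>]) simp_all
    then show ?thesis
      by (simp add: f1_def)
  qed (simp add: f1_def)
  have "ennreal (pbar \<sigma> \<gamma> a g * phi g) * indicator B 0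
        + ennreal ((1 - pbar \<sigma> \<gamma> a g) * phi g) * indicator B (max 0 (a - 2 * \<sigma> * sqrt \<gamma> * g))
      = ennreal (f0 g) + ennreal (f1 g)" for g
    unfolding truncation[symmetric] by (simp add: f0_def indicator_def)
  then have "emeasure (step_law \<sigma> \<gamma> a) B = (\<integral>\<^sup>+g. ennreal (f0 g + f1 g) \<partial>lborel)"
    by (simp add: emeasure_step_law[OF B] f_nonneg)
  also have "\<dots> = ennreal (\<integral>g. f0 g + f1 g \<partial>lborel)"
    using Bochner_Integration.integrable_add[OF integrable] f_nonneg
    by (intro nn_integral_eq_integral AE_I2 add_nonneg_nonneg)
  also have "(\<integral>g. f0 g + f1 g \<partial>lborel) = (\<integral>g. f0 g \<partial>lborel) + (\<integral>g. f1 g \<partial>lborel)"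
    using integrable by (rule Bochner_Integration.integral_add)
  finally show ?thesis
    by (simp only: f0_def f1_def integral_mult_right_zero)
qed

lemma Qmeas_eq_step_law:
  assumes "0 \<le> \<tau> \<gamma> w + \<gamma> * c"
  shows "Qmeas \<sigma> c \<tau> \<gamma> w = step_law \<sigma> \<gamma> (\<tau> \<gamma> w + \<gamma> * c)"
proof -
  have "ennreal (Qfun \<sigma> c \<tau> \<gamma> w B) = emeasure (step_law \<sigma> \<gamma> (\<tau> \<gamma> w + \<gamma> * c)) B"
    if "B \<in> sets state_space" for B
    by (simp only: Qfun_def Let_def emeasure_step_law_eq_integral[OF assms that])
  moreover have "sigma_sets {0..} (sets state_space) = sets state_space"
    using sets.sigma_sets_eq[of state_space] by simp
  moreover have "sets state_space \<subseteq> Pow {0..}"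
    using sets.space_closed[of state_space] by simp
  ultimately have "Qmeas \<sigma> c \<tau> \<gamma> w
      = measure_of {0..} (sets state_space) (emeasure (step_law \<sigma> \<gamma> (\<tau> \<gamma> w + \<gamma> * c)))"
    unfolding Qmeas_def by (intro measure_of_eq) simp_all
  also have "\<dots> = step_law \<sigma> \<gamma> (\<tau> \<gamma> w + \<gamma> * c)"
    using measure_of_of_measure[of "step_law \<sigma> \<gamma> (\<tau> \<gamma> w + \<gamma> * c)"] by simp
  finally show ?thesis .
qed

lemma nn_integral_step_law_ident_le:
  assumes a: "0 \<le> a"
  shows "(\<integral>\<^sup>+y. ennreal y \<partial>step_law \<sigma> \<gamma> a) \<le> ennreal (a + 2 * \<sigma> * sqrt \<gamma>)"
proof -
  define s where "s = 2 * \<sigma> * sqrt \<gamma>"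
  have s: "0 < s"
    using \<sigma> \<gamma> by (simp add: s_def)
  have "(\<integral>\<^sup>+y. ennreal y \<partial>step_law \<sigma> \<gamma> a)
      = (\<integral>\<^sup>+g. ennreal ((1 - pbar \<sigma> \<gamma> a g) * phi g) * ennreal (max 0 (a - s * g)) \<partial>lborel)"
    by (simp add: nn_integral_step_law s_def)
  also have "\<dots> \<le> (\<integral>\<^sup>+g. ennreal (a * phi g + s * (phi g * \<bar>g\<bar>)) \<partial>lborel)"
  proof (rule nn_integral_mono)
    fix g
    have "max 0 (a - s * g) \<le> a + s * \<bar>g\<bar>"
      using a s by (auto simp: max_def abs_if mult_less_0_iff)
    then have "(1 - pbar \<sigma> \<gamma> a g) * phi g * max 0 (a - s * g) \<le> 1 * phi g * (a + s * \<bar>g\<bar>)"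
      using pbar_le_1 pbar_nonneg[OF \<sigma> \<gamma>] by (intro mult_mono) auto
    then have "ennreal ((1 - pbar \<sigma> \<gamma> a g) * phi g * max 0 (a - s * g))
        \<le> ennreal (a * phi g + s * (phi g * \<bar>g\<bar>))"
      by (intro ennreal_leI) (simp add: algebra_simps)
    moreover have "ennreal ((1 - pbar \<sigma> \<gamma> a g) * phi g) * ennreal (max 0 (a - s * g))
        = ennreal ((1 - pbar \<sigma> \<gamma> a g) * phi g * max 0 (a - s * g))"
      using pbar_le_1[of \<sigma> \<gamma> a g] by (intro ennreal_mult[symmetric]) auto
    ultimately show "ennreal ((1 - pbar \<sigma> \<gamma> a g) * phi g) * ennreal (max 0 (a - s * g))
        \<le> ennreal (a * phi g + s * (phi g * \<bar>g\<bar>))"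
      by simp
  qed
  also have "\<dots> = ennreal (a + s * (\<integral>g. phi g * \<bar>g\<bar> \<partial>lborel))"
    using a s by (subst nn_integral_eq_integral) (auto simp: integrable_phi integrable_phi_abs integral_phi)
  also have "\<dots> \<le> ennreal (a + s)"
    using s integral_phi_abs_le_1 by (intro ennreal_leI) (simp add: mult_left_le)
  finally show ?thesis
    by (simp add: s_def)
qed

lemma emeasure_step_law_0_ge:
  assumes a: "0 \<le> a" and t: "0 \<le> t" and a_le: "a \<le> 2 * \<sigma> * sqrt \<gamma> * t"
  shows "ennreal (phi (t + 1)) \<le> emeasure (step_law \<sigma> \<gamma> a) {0}"
proof -
  \<comment> \<open>every proposal g \<ge> t is rejected, so the jump to 0 has probability at least that of [t, t + 1]\<close>
  have "ennreal (phi (t + 1)) * indicator {t..t+1} g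
      \<le> ennreal (pbar \<sigma> \<gamma> a g * phi g) * indicator {0::real} 0
        + ennreal ((1 - pbar \<sigma> \<gamma> a g) * phi g) * indicator {0} (max 0 (a - 2 * \<sigma> * sqrt \<gamma> * g))" for g
  proof (cases "g \<in> {t..t+1}")
    case True
    then have "a \<le> 2 * \<sigma> * sqrt \<gamma> * g"
      using a_le \<sigma> \<gamma> by (smt (verit) atLeastAtMost_iff mult_left_mono mult_nonneg_nonneg real_sqrt_ge_zero)
    then have "pbar \<sigma> \<gamma> a g = 1"
      by (rule pbar_eq_1[OF \<sigma> \<gamma> a])
    moreover have "phi (t + 1) \<le> phi g"
      using True t by (intro phi_antimono) auto
    ultimately show ?thesis
      using True by (simp add: ennreal_leI)
  qed simp
  then have "(\<integral>\<^sup>+g. ennreal (phi (t + 1)) * indicator {t..t+1} g \<partial>lborel)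
      \<le> (\<integral>\<^sup>+g. ennreal (pbar \<sigma> \<gamma> a g * phi g) * indicator {0::real} 0
        + ennreal ((1 - pbar \<sigma> \<gamma> a g) * phi g) * indicator {0} (max 0 (a - 2 * \<sigma> * sqrt \<gamma> * g)) \<partial>lborel)"
    by (rule nn_integral_mono)
  also have "\<dots> = emeasure (step_law \<sigma> \<gamma> a) {0}"
    by (rule emeasure_step_law[symmetric]) (simp add: sets_state_space_iff)
  finally show ?thesis
    by (simp add: nn_integral_cmult_indicator)
qed

lemma emeasure_step_law_eq_0:
  assumes B: "B \<in> sets state_space" and "0 \<notin> B" and "emeasure lborel B = 0"
  shows "emeasure (step_law \<sigma> \<gamma> a) B = 0"
proof -
  have [measurable]: "B \<in> sets borel"
    using B by (simp add: sets_state_space_iff)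
  have "AE y in lborel. y \<notin> B"
    using assms by (intro AE_not_in) auto
  then have "AE g in lborel. a + - (2 * \<sigma> * sqrt \<gamma>) * g \<notin> B"
    using \<sigma> \<gamma> by (intro AE_borel_affine) auto
  then have "AE g in lborel. ennreal (pbar \<sigma> \<gamma> a g * phi g) * indicator B 0
      + ennreal ((1 - pbar \<sigma> \<gamma> a g) * phi g) * indicator B (max 0 (a - 2 * \<sigma> * sqrt \<gamma> * g)) = 0"
    by eventually_elim (use \<open>0 \<notin> B\<close> in \<open>auto simp: max_def\<close>)
  then show ?thesis
    by (simp add: emeasure_step_law[OF B] nn_integral_0_iff_AE)
qed

lemma emeasure_lborel_eq_0_if_step_law:
  assumes a: "0 < a" and B: "B \<in> sets state_space" and "emeasure (step_law \<sigma> \<gamma> a) B = 0"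
  shows "emeasure lborel B = 0"
proof -
  define s where "s = 2 * \<sigma> * sqrt \<gamma>"
  have s: "0 < s"
    using \<sigma> \<gamma> by (simp add: s_def)
  have [measurable]: "B \<in> sets borel" and B_nonneg: "B \<subseteq> {0..}"
    using B by (simp_all add: sets_state_space_iff)
  have "AE g in lborel. ennreal (pbar \<sigma> \<gamma> a g * phi g) * indicator B 0
      + ennreal ((1 - pbar \<sigma> \<gamma> a g) * phi g) * indicator B (max 0 (a - s * g)) = 0"
    using assms(3) by (subst (asm) emeasure_step_law[OF B]) (simp add: nn_integral_0_iff_AE s_def)
  \<comment> \<open>every proposal landing in (0, \<infinity>) is accepted with positive probability\<close>
  then have "AE g in lborel. s * g < a \<longrightarrow> a - s * g \<notin> B"
  proof eventually_elim
    case (elim g)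
    show ?case
    proof
      assume lt: "s * g < a"
      then have "0 < (1 - pbar \<sigma> \<gamma> a g) * phi g"
        using pbar_less_1[OF \<sigma> \<gamma> a] phi_pos[of g] by (simp add: s_def)
      then show "a - s * g \<notin> B"
        using elim lt by (auto simp: max_def)
    qed
  qed
  then have "AE y in lborel. s * (a / s + - (1 / s) * y) < a \<longrightarrow> a - s * (a / s + - (1 / s) * y) \<notin> B"
    using s by (intro AE_borel_affine) auto
  then have "AE y in lborel. 0 < y \<longrightarrow> y \<notin> B"
    using s by (simp add: field_simps zero_less_mult_iff)
  moreover have "AE y in lborel. y \<noteq> 0"
    by (rule AE_I[where N = "{0}"]) auto
  ultimately have "AE y in lborel. y \<notin> B"
    by eventually_elim (use B_nonneg in auto)
  then show ?thesis
    by (subst (asm) AE_iff_measurable[of B]) auto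
qed

end

section \<open>Iterated kernels on [0, \<infinity>)\<close>

primrec kernel_pow :: "(real \<Rightarrow> real measure) \<Rightarrow> nat \<Rightarrow> real \<Rightarrow> real measure" where
  "kernel_pow Q 0 w = return state_space w"
| "kernel_pow Q (Suc n) w = bind (Q w) (kernel_pow Q n)"

lemma kernel_pow_0: "kernel_pow Q 0 = return state_space"
  by (simp add: fun_eq_iff)

locale state_kernel =
  fixes Q :: "real \<Rightarrow> real measure"
  assumes Q_measurable: "Q \<in> state_space \<rightarrow>\<^sub>M subprob_algebra state_space"
    and prob_space_Q: "\<And>x. 0 \<le> x \<Longrightarrow> prob_space (Q x)"
begin

definition invariant :: "real measure \<Rightarrow> bool" where
  "invariant \<nu> \<longleftrightarrow> sets \<nu> = sets state_space \<and> prob_space \<nu> \<and>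
     (\<forall>A \<in> sets state_space. emeasure \<nu> A = (\<integral>\<^sup>+w. emeasure (Q w) A \<partial>\<nu>))"

lemma sets_Q [simp]: "0 \<le> x \<Longrightarrow> sets (Q x) = sets state_space"
  using sets_kernel[OF Q_measurable, of x] by simp

lemma space_Q [simp]: "0 \<le> x \<Longrightarrow> space (Q x) = {0..}"
  using sets_eq_imp_space_eq[OF sets_Q, of x] by simp

lemma measurable_Q_cong:
  assumes "sets M = sets state_space"
  shows "Q \<in> M \<rightarrow>\<^sub>M subprob_algebra state_space"
  using Q_measurable measurable_cong_sets[OF assms refl] by blast

lemma kernel_pow_measurable: "kernel_pow Q n \<in> state_space \<rightarrow>\<^sub>M subprob_algebra state_space"
  by (induction n) (simp_all add: return_measurable measurable_bind2[OF Q_measurable])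

lemma measurable_kernel_pow_cong:
  assumes "sets M = sets state_space"
  shows "kernel_pow Q n \<in> M \<rightarrow>\<^sub>M subprob_algebra state_space"
  using kernel_pow_measurable measurable_cong_sets[OF assms refl] by blast

lemma sets_kernel_pow [simp]: "0 \<le> x \<Longrightarrow> sets (kernel_pow Q n x) = sets state_space"
  using sets_kernel[OF kernel_pow_measurable, of x n] by simp

lemma space_kernel_pow [simp]: "0 \<le> x \<Longrightarrow> space (kernel_pow Q n x) = {0..}"
  using sets_eq_imp_space_eq[OF sets_kernel_pow, of x n] by simp

lemma prob_space_kernel_pow: "0 \<le> x \<Longrightarrow> prob_space (kernel_pow Q n x)"
proof (induction n arbitrary: x)
  case (Suc n)
  interpret prob_space "Q x"
    using prob_space_Q Suc by simp
  show ?case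
    using Suc measurable_kernel_pow_cong[OF sets_Q[OF Suc.prems]]
    by (auto intro!: prob_space_bind AE_I2)
qed (simp add: prob_space_return)

lemma kernel_pow_1: "0 \<le> x \<Longrightarrow> kernel_pow Q 1 x = Q x"
  by (simp add: kernel_pow_0 bind_return'')

lemma kernel_pow_add: "0 \<le> x \<Longrightarrow> kernel_pow Q (k + n) x = bind (kernel_pow Q k x) (kernel_pow Q n)"
proof (induction k arbitrary: x)
  case 0
  then show ?case
    by (simp add: bind_return[OF kernel_pow_measurable])
next
  case (Suc k)
  have "kernel_pow Q (Suc k + n) x = bind (Q x) (\<lambda>y. bind (kernel_pow Q k y) (kernel_pow Q n))"
    using Suc by (auto intro: bind_cong)
  also have "\<dots> = bind (bind (Q x) (kernel_pow Q k)) (kernel_pow Q n)"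
    using Suc.prems
    by (intro bind_assoc[symmetric, OF measurable_kernel_pow_cong kernel_pow_measurable]) simp
  finally show ?case
    by simp
qed

lemma kernel_pow_Suc':
  assumes "0 \<le> x"
  shows "kernel_pow Q (Suc n) x = bind (kernel_pow Q n x) Q"
proof -
  have "kernel_pow Q (n + 1) x = bind (kernel_pow Q n x) (kernel_pow Q 1)"
    using assms by (rule kernel_pow_add)
  also have "\<dots> = bind (kernel_pow Q n x) Q"
    using assms by (intro bind_cong[OF refl] kernel_pow_1) simp
  finally show ?thesis
    by simp
qed

lemma measure_kernel_pow_add:
  assumes "0 \<le> x" "A \<in> sets state_space"
  shows "measure (kernel_pow Q (k + n) x) A = (\<integral>y. measure (kernel_pow Q n y) A \<partial>kernel_pow Q k x)"
proof -
  interpret prob_space "kernel_pow Q k x"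
    using prob_space_kernel_pow assms by simp
  show ?thesis
    using measure_bind[OF measurable_kernel_pow_cong[OF sets_kernel_pow[OF assms(1)]], of A] assms
    by (simp add: kernel_pow_add)
qed

lemma measure_kernel_pow_Suc:
  assumes "0 \<le> x" "A \<in> sets state_space"
  shows "measure (kernel_pow Q (Suc n) x) A = (\<integral>y. measure (kernel_pow Q n y) A \<partial>Q x)"
  using measure_kernel_pow_add[OF assms, of 1 n]
  by (simp only: kernel_pow_1[OF assms(1)] Suc_eq_plus1 add.commute)

lemma measure_kernel_pow_Suc':
  assumes "0 \<le> x" "A \<in> sets state_space"
  shows "measure (kernel_pow Q (Suc n) x) A = (\<integral>y. measure (Q y) A \<partial>kernel_pow Q n x)"
proof -
  have "measure (kernel_pow Q (n + 1) x) A = (\<integral>y. measure (kernel_pow Q 1 y) A \<partial>kernel_pow Q n x)"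
    by (rule measure_kernel_pow_add[OF assms])
  also have "\<dots> = (\<integral>y. measure (Q y) A \<partial>kernel_pow Q n x)"
    using assms(1) by (intro Bochner_Integration.integral_cong) (simp_all add: kernel_pow_0 bind_return'')
  finally show ?thesis
    by simp
qed

lemma borel_measurable_measure_kernel_pow [measurable]:
  "A \<in> sets state_space \<Longrightarrow> (\<lambda>y. measure (kernel_pow Q n y) A) \<in> borel_measurable state_space"
  using measurable_compose[OF kernel_pow_measurable measurable_measure_subprob_algebra] by blast

lemma borel_measurable_measure_Q [measurable]:
  "A \<in> sets state_space \<Longrightarrow> (\<lambda>y. measure (Q y) A) \<in> borel_measurable state_space"
  using measurable_compose[OF Q_measurable measurable_measure_subprob_algebra] by blast

lemma measure_kernel_pow_le_1: "0 \<le> y \<Longrightarrow> measure (kernel_pow Q n y) A \<le> 1"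
  using prob_space.prob_le_1[OF prob_space_kernel_pow] by simp

lemma measure_kernel_pow_space: "0 \<le> x \<Longrightarrow> measure (kernel_pow Q n x) {0..} = 1"
  using prob_space.prob_space[OF prob_space_kernel_pow] by simp

lemma measure_Q_le_1: "0 \<le> y \<Longrightarrow> measure (Q y) A \<le> 1"
  using prob_space.prob_le_1[OF prob_space_Q] by simp

lemma invariant_bind:
  assumes "invariant \<nu>"
  shows "bind \<nu> Q = \<nu>"
proof (rule measure_eqI)
  have sets_\<nu>: "sets \<nu> = sets state_space" and space_\<nu>: "space \<nu> = {0..}"
    using assms sets_eq_imp_space_eq[of \<nu> state_space] by (simp_all add: invariant_def)
  show sets_bind: "sets (bind \<nu> Q) = sets \<nu>"
    using sets_bind[of \<nu> Q state_space] sets_\<nu> space_\<nu> by simp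
  show "emeasure (bind \<nu> Q) A = emeasure \<nu> A" if "A \<in> sets (bind \<nu> Q)" for A
    using that assms emeasure_bind[OF _ measurable_Q_cong[OF sets_\<nu>], of A] sets_bind sets_\<nu> space_\<nu>
    by (simp add: invariant_def)
qed

lemma invariant_emeasure_kernel_pow:
  assumes "invariant \<nu>" "A \<in> sets state_space"
  shows "emeasure \<nu> A = (\<integral>\<^sup>+w. emeasure (kernel_pow Q n w) A \<partial>\<nu>)"
proof (induction n)
  case 0
  show ?case
    using assms by (simp add: invariant_def cong: nn_integral_cong)
next
  case (Suc n)
  have sets_\<nu>: "sets \<nu> = sets state_space" and space_\<nu>: "space \<nu> = {0..}"
    using assms sets_eq_imp_space_eq[of \<nu> state_space] by (simp_all add: invariant_def)
  have "(\<integral>\<^sup>+w. emeasure (kernel_pow Q (Suc n) w) A \<partial>\<nu>)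
      = (\<integral>\<^sup>+w. \<integral>\<^sup>+y. emeasure (kernel_pow Q n y) A \<partial>Q w \<partial>\<nu>)"
    using assms(2) space_\<nu>
    by (intro nn_integral_cong) (simp add: emeasure_bind[OF _ measurable_kernel_pow_cong[OF sets_Q]])
  also have "\<dots> = (\<integral>\<^sup>+y. emeasure (kernel_pow Q n y) A \<partial>bind \<nu> Q)"
    using assms(2)
    by (intro nn_integral_bind[symmetric, OF measurable_emeasure_kernel[OF kernel_pow_measurable]
          measurable_Q_cong[OF sets_\<nu>]])
  finally show ?case
    using Suc invariant_bind[OF assms(1)] by simp
qed

lemma invariant_measure_kernel_pow:
  assumes "invariant \<nu>" "A \<in> sets state_space"
  shows "measure \<nu> A = (\<integral>w. measure (kernel_pow Q n w) A \<partial>\<nu>)"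
proof -
  have sets_\<nu>: "sets \<nu> = sets state_space" and "prob_space \<nu>"
    using assms(1) by (simp_all add: invariant_def)
  interpret \<nu>: prob_space \<nu> by fact
  have "ennreal (measure \<nu> A) = (\<integral>\<^sup>+w. emeasure (kernel_pow Q n w) A \<partial>\<nu>)"
    using invariant_emeasure_kernel_pow[OF assms] \<nu>.emeasure_eq_measure by simp
  also have "\<dots> = ennreal (\<integral>w. measure (kernel_pow Q n w) A \<partial>\<nu>)"
    using assms(2) prob_space_kernel_pow sets_eq_imp_space_eq[OF sets_\<nu>]
    by (intro nn_integral_emeasure_eq_integral_measure[OF \<nu>.prob_space_axioms measurable_kernel_pow_cong[OF sets_\<nu>]])
       auto
  finally show ?thesis
    by (simp add: integral_nonneg_AE)
qed

lemma invariant_absolutely_continuous: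
  assumes "invariant \<nu>" "sets N = sets state_space"
    and "\<And>w. 0 \<le> w \<Longrightarrow> absolutely_continuous N (Q w)"
  shows "absolutely_continuous N \<nu>"
  unfolding absolutely_continuous_def
proof
  fix B
  assume "B \<in> null_sets N"
  then have B: "B \<in> sets state_space" and "\<And>w. 0 \<le> w \<Longrightarrow> emeasure (Q w) B = 0"
    using assms(2,3) by (auto simp: absolutely_continuous_def null_sets_def)
  moreover have "space \<nu> = {0..}"
    using assms(1) sets_eq_imp_space_eq[of \<nu> state_space] by (simp add: invariant_def)
  ultimately have "(\<integral>\<^sup>+w. emeasure (Q w) B \<partial>\<nu>) = (\<integral>\<^sup>+w. 0 \<partial>\<nu>)"
    by (intro nn_integral_cong) simp
  then have "emeasure \<nu> B = 0"
    using assms(1) B by (simp add: invariant_def)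
  then show "B \<in> null_sets \<nu>"
    using assms(1) B by (simp add: invariant_def null_sets_def)
qed

lemma absolutely_continuous_Q_0:
  assumes "invariant \<nu>" "0 < emeasure \<nu> {0}"
  shows "absolutely_continuous \<nu> (Q 0)"
  unfolding absolutely_continuous_def
proof
  fix B
  assume "B \<in> null_sets \<nu>"
  then have B: "B \<in> sets state_space" and "emeasure \<nu> B = 0"
    using assms(1) by (auto simp: invariant_def null_sets_def)
  have [simp]: "{0} \<in> sets \<nu>"
    using assms(1) by (simp add: invariant_def sets_state_space_iff)
  \<comment> \<open>\<nu> B \<ge> \<nu>{0} Q(0, B)\<close>
  have "emeasure (Q 0) B * emeasure \<nu> {0} = (\<integral>\<^sup>+w. emeasure (Q 0) B * indicator {0} w \<partial>\<nu>)"
    by (simp add: nn_integral_cmult_indicator)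
  also have "\<dots> \<le> (\<integral>\<^sup>+w. emeasure (Q w) B \<partial>\<nu>)"
    by (intro nn_integral_mono) (auto simp: indicator_def)
  also have "\<dots> = 0"
    using assms(1) B \<open>emeasure \<nu> B = 0\<close> by (simp add: invariant_def)
  finally show "B \<in> null_sets (Q 0)"
    using assms(2) B by (auto simp: null_sets_def)
qed

end

section \<open>Harris' theorem with an atom at 0\<close>

locale harris_chain = state_kernel +
  fixes \<theta> K R \<alpha> :: real
  assumes drift: "\<And>x. 0 \<le> x \<Longrightarrow> (\<integral>\<^sup>+y. ennreal y \<partial>Q x) \<le> ennreal (\<theta> * x + K)"
    and \<theta>: "0 \<le> \<theta>" "\<theta> < 1" and K: "0 < K" and R: "2 * K / (1 - \<theta>) < R"
    and \<alpha>: "0 < \<alpha>"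
    and minorization: "\<And>x. 0 \<le> x \<Longrightarrow> x \<le> R \<Longrightarrow> ennreal \<alpha> \<le> emeasure (Q x) {0}"
begin

lemma R_pos: "0 < R"
  using R K \<theta> by (smt (verit) divide_pos_pos)

lemma
  assumes "0 \<le> x"
  shows integrable_Q_ident: "integrable (Q x) (\<lambda>y. y)"
    and integral_Q_ident_le: "(\<integral>y. y \<partial>Q x) \<le> \<theta> * x + K"
proof -
  have "(\<lambda>y::real. y) \<in> borel_measurable (Q x)"
    using assms by (simp add: measurable_cong_sets[OF sets_Q refl])
  moreover have "\<And>y. y \<in> space (Q x) \<Longrightarrow> 0 \<le> y" "0 \<le> \<theta> * x + K"
    using assms \<theta> K by simp_all
  ultimately show "integrable (Q x) (\<lambda>y. y)" "(\<integral>y. y \<partial>Q x) \<le> \<theta> * x + K"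
    using integral_le_of_nn_integral_le[OF _ _ drift[OF assms]] by blast+
qed

lemma nn_integral_kernel_pow_ident_le: "(\<integral>\<^sup>+y. ennreal y \<partial>kernel_pow Q k 0) \<le> ennreal (K / (1 - \<theta>))"
proof (induction k)
  case (Suc k)
  interpret prob_space "kernel_pow Q k 0"
    using prob_space_kernel_pow by simp
  have "(\<lambda>y::real. y) \<in> borel_measurable (kernel_pow Q k 0)"
    by (simp add: measurable_cong_sets[OF sets_kernel_pow refl])
  then have [measurable]: "(\<lambda>y. ennreal y) \<in> borel_measurable (kernel_pow Q k 0)"
    by measurable
  have "(\<integral>\<^sup>+y. ennreal y \<partial>kernel_pow Q (Suc k) 0) = (\<integral>\<^sup>+x. \<integral>\<^sup>+y. ennreal y \<partial>Q x \<partial>kernel_pow Q k 0)"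
    by (subst kernel_pow_Suc') (simp_all add: nn_integral_bind[OF _ measurable_Q_cong[OF sets_kernel_pow]])
  also have "\<dots> \<le> (\<integral>\<^sup>+x. ennreal \<theta> * ennreal x + ennreal K \<partial>kernel_pow Q k 0)"
  proof (intro nn_integral_mono)
    fix x
    assume "x \<in> space (kernel_pow Q k 0)"
    then have "ennreal (\<theta> * x + K) = ennreal \<theta> * ennreal x + ennreal K"
      using \<theta> K by (simp add: ennreal_mult)
    then show "(\<integral>\<^sup>+y. ennreal y \<partial>Q x) \<le> ennreal \<theta> * ennreal x + ennreal K"
      using drift \<open>x \<in> space (kernel_pow Q k 0)\<close> by fastforce
  qed
  also have "\<dots> = ennreal \<theta> * (\<integral>\<^sup>+x. ennreal x \<partial>kernel_pow Q k 0) + ennreal K"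
    using emeasure_space_1 by (simp add: nn_integral_add nn_integral_cmult)
  also have "\<dots> \<le> ennreal \<theta> * ennreal (K / (1 - \<theta>)) + ennreal K"
    by (intro add_mono mult_left_mono Suc) auto
  also have "\<dots> = ennreal (\<theta> * (K / (1 - \<theta>))) + ennreal K"
    using \<theta> K by (subst ennreal_mult) auto
  also have "\<dots> = ennreal (\<theta> * (K / (1 - \<theta>)) + K)"
    using \<theta> K by (intro ennreal_plus[symmetric]) auto
  also have "\<theta> * (K / (1 - \<theta>)) + K = K / (1 - \<theta>)"
    using \<theta> by (simp add: field_simps)
  finally show ?case .
qed (simp add: nn_integral_return)

lemma integrable_kernel_pow_ident: "integrable (kernel_pow Q k 0) (\<lambda>y. y)"
  and integral_kernel_pow_ident_le: "(\<integral>y. y \<partial>kernel_pow Q k 0) \<le> K / (1 - \<theta>)"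
proof -
  have "(\<lambda>y::real. y) \<in> borel_measurable (kernel_pow Q k 0)"
    by (simp add: measurable_cong_sets[OF sets_kernel_pow refl])
  moreover have "\<And>y. y \<in> space (kernel_pow Q k 0) \<Longrightarrow> 0 \<le> y" "0 \<le> K / (1 - \<theta>)"
    using \<theta> K by simp_all
  ultimately show "integrable (kernel_pow Q k 0) (\<lambda>y. y)" "(\<integral>y. y \<partial>kernel_pow Q k 0) \<le> K / (1 - \<theta>)"
    using integral_le_of_nn_integral_le[OF _ _ nn_integral_kernel_pow_ident_le] by blast+
qed

lemma integral_Q_ge_minorization:
  assumes x: "0 \<le> x" "x \<le> R" and f: "integrable (Q x) f" and f_nonneg: "\<And>y. 0 \<le> y \<Longrightarrow> 0 \<le> f y"
  shows "\<alpha> * f 0 \<le> (\<integral>y. f y \<partial>Q x)"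
proof -
  interpret prob_space "Q x"
    using prob_space_Q x by simp
  have [simp]: "{0} \<in> sets (Q x)"
    using x by (simp add: sets_state_space_iff)
  have "\<alpha> \<le> measure (Q x) {0}"
    using minorization[OF x] by (simp add: emeasure_eq_measure)
  then have "\<alpha> * f 0 \<le> (\<integral>y. f 0 * indicator {0} y \<partial>Q x)"
    using f_nonneg[of 0] mult_right_mono[of \<alpha> "measure (Q x) {0}" "f 0"] by (simp add: mult.commute)
  also have "\<dots> = (\<integral>y. f y * indicator {0} y \<partial>Q x)"
    by (intro Bochner_Integration.integral_cong) (auto simp: indicator_def)
  also have "\<dots> \<le> (\<integral>y. f y \<partial>Q x)"
  proof (rule integral_mono[OF _ f])
    show "integrable (Q x) (\<lambda>y. f y * indicator {0} y)"
      using integrable_mult_indicator[OF _ f, of "{0}"] by (simp add: mult.commute)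
    show "f y * indicator {0} y \<le> f y" if "y \<in> space (Q x)" for y
      using that x f_nonneg[of y] by (simp add: indicator_def)
  qed
  finally show ?thesis .
qed

(* Hairer and Mattingly's proof of Harris' theorem: with the Lyapunov function V(x) = x and
   weight = \<alpha> / (2 K), one step of Q contracts the distance wdist x y (for x \<noteq> y) by rate < 1. *)
definition weight :: real where
  "weight = \<alpha> / (2 * K)"

definition wdist :: "real \<Rightarrow> real \<Rightarrow> real" where
  "wdist x y = 2 + weight * x + weight * y"

definition rate :: real where
  "rate = max ((2 + \<alpha> + weight * \<theta> * R) / (2 + weight * R)) (max (1 - \<alpha> / 2) \<theta>)"

lemma weight_pos: "0 < weight"
  using \<alpha> K by (simp add: weight_def)

lemma weight_K: "2 * weight * K = \<alpha>"
  using K by (simp add: weight_def)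

lemma wdist_pos: "0 \<le> x \<Longrightarrow> 0 \<le> y \<Longrightarrow> 0 < wdist x y"
  using weight_pos by (simp add: wdist_def add_pos_nonneg)

lemma rate_nonneg: "0 \<le> rate"
  using \<theta> by (simp add: rate_def)

lemma rate_less_1: "rate < 1"
proof -
  have "2 * K < (1 - \<theta>) * R"
    using R \<theta> by (simp add: field_simps)
  then have "weight * (2 * K) < weight * ((1 - \<theta>) * R)"
    using weight_pos by simp
  then have "2 + \<alpha> + weight * \<theta> * R < 2 + weight * R"
    using weight_K by (simp add: algebra_simps)
  moreover have "0 < 2 + weight * R"
    using weight_pos R_pos by (simp add: add_pos_pos)
  ultimately show ?thesis
    using \<alpha> \<theta> by (simp add: rate_def)
qed

lemma rate_far:
  assumes "R < s"
  shows "2 + weight * (\<theta> * s + 2 * K) \<le> rate * (2 + weight * s)"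
proof -
  have pos: "0 < 2 + weight * R"
    using weight_pos R_pos by (simp add: add_pos_pos)
  have "0 \<le> weight * (s - R) * (2 + \<alpha> - 2 * \<theta>)"
    using weight_pos assms \<alpha> \<theta> by simp
  then have "(2 + \<alpha> + weight * \<theta> * s) * (2 + weight * R) \<le> (2 + \<alpha> + weight * \<theta> * R) * (2 + weight * s)"
    by (simp add: algebra_simps)
  then have "2 + \<alpha> + weight * \<theta> * s \<le> (2 + \<alpha> + weight * \<theta> * R) / (2 + weight * R) * (2 + weight * s)"
    using pos by (simp add: field_simps)
  also have "\<dots> \<le> rate * (2 + weight * s)"
    using weight_pos R_pos assms by (intro mult_right_mono) (auto simp: rate_def)
  finally show ?thesis
    using weight_K by (simp add: algebra_simps)
qed

lemma rate_near:
  assumes "0 \<le> s"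
  shows "2 - 2 * \<alpha> + weight * (\<theta> * s + 2 * K) \<le> rate * (2 + weight * s)"
proof -
  have "2 - 2 * \<alpha> + weight * (\<theta> * s + 2 * K) = (2 - \<alpha>) + \<theta> * (weight * s)"
    using weight_K by (simp add: algebra_simps)
  also have "\<dots> \<le> 2 * rate + rate * (weight * s)"
  proof (intro add_mono mult_right_mono)
    have "1 - \<alpha> / 2 \<le> rate"
      by (simp add: rate_def)
    then show "2 - \<alpha> \<le> 2 * rate"
      by simp
    show "\<theta> \<le> rate"
      by (simp add: rate_def)
  qed (use weight_pos assms in simp)
  finally show ?thesis
    by (simp add: algebra_simps)
qed

lemma integrable_Q_weight:
  assumes "0 \<le> u"
  shows "integrable (Q u) (\<lambda>y. M * (1 + weight * y))"
proof -
  interpret prob_space "Q u"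
    using prob_space_Q assms by simp
  show ?thesis
    using integrable_Q_ident[OF assms] by simp
qed

lemma integral_Q_weight_le:
  assumes "0 \<le> u" "0 \<le> M"
  shows "(\<integral>y. M * (1 + weight * y) \<partial>Q u) \<le> M + M * weight * (\<theta> * u + K)"
proof -
  interpret prob_space "Q u"
    using prob_space_Q assms by simp
  have "(\<integral>y. M * (1 + weight * y) \<partial>Q u) = M + M * weight * (\<integral>y. y \<partial>Q u)"
    using integrable_Q_ident[OF assms(1)] by (simp add: prob_space algebra_simps)
  also have "\<dots> \<le> M + M * weight * (\<theta> * u + K)"
    using integral_Q_ident_le[OF assms(1)] assms weight_pos by (simp add: mult_left_mono)
  finally show ?thesis .
qed

context
  fixes g :: "real \<Rightarrow> real" and B M :: real
  assumes g: "g \<in> borel_measurable state_space" and g_bdd: "\<And>y. 0 \<le> y \<Longrightarrow> \<bar>g y\<bar> \<le> B"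
    and g_le: "\<And>y. 0 \<le> y \<Longrightarrow> \<bar>g y\<bar> \<le> M * (1 + weight * y)" and M: "0 \<le> M"
begin

lemma integrable_Q_bounded:
  assumes "0 \<le> u"
  shows "integrable (Q u) g"
proof -
  interpret prob_space "Q u"
    using prob_space_Q assms by simp
  show ?thesis
    using g g_bdd assms
    by (intro integrable_const_bound[where B = B]) (auto simp: measurable_cong_sets[OF sets_Q refl])
qed

lemma integral_Q_centered_le:
  assumes u: "0 \<le> u"
  shows "\<bar>\<integral>y. g y \<partial>Q u\<bar> \<le> M + M * weight * (\<theta> * u + K)"
proof -
  have "\<bar>\<integral>y. g y \<partial>Q u\<bar> \<le> (\<integral>y. M * (1 + weight * y) \<partial>Q u)"
    using integrable_Q_bounded[OF u] integrable_Q_weight[OF u] g_le u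
    by (intro integral_abs_bound_integral) simp_all
  also have "\<dots> \<le> M + M * weight * (\<theta> * u + K)"
    using u M by (rule integral_Q_weight_le)
  finally show ?thesis .
qed

lemma integral_Q_centered_minorized_le:
  assumes u: "0 \<le> u" "u \<le> R"
  shows "\<bar>(\<integral>y. g y \<partial>Q u) - \<alpha> * g 0\<bar> \<le> M - \<alpha> * M + M * weight * (\<theta> * u + K)"
proof -
  let ?V = "\<integral>y. M * (1 + weight * y) \<partial>Q u"
  have int: "integrable (Q u) (\<lambda>y. M * (1 + weight * y) + g y)" "integrable (Q u) (\<lambda>y. M * (1 + weight * y) - g y)"
    using integrable_Q_weight[OF u(1)] integrable_Q_bounded[OF u(1)] by auto
  have nonneg: "0 \<le> M * (1 + weight * y) + g y" "0 \<le> M * (1 + weight * y) - g y" if "0 \<le> y" for y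
    using g_le[OF that] by (simp_all add: abs_le_iff)
  have "\<alpha> * (M * (1 + weight * 0) + g 0) \<le> (\<integral>y. M * (1 + weight * y) + g y \<partial>Q u)"
    using u int(1) nonneg(1) by (rule integral_Q_ge_minorization)
  moreover have "\<alpha> * (M * (1 + weight * 0) - g 0) \<le> (\<integral>y. M * (1 + weight * y) - g y \<partial>Q u)"
    using u int(2) nonneg(2) by (rule integral_Q_ge_minorization)
  moreover have "(\<integral>y. M * (1 + weight * y) + g y \<partial>Q u) = ?V + (\<integral>y. g y \<partial>Q u)"
    "(\<integral>y. M * (1 + weight * y) - g y \<partial>Q u) = ?V - (\<integral>y. g y \<partial>Q u)"
    using integrable_Q_weight[OF u(1)] integrable_Q_bounded[OF u(1)] by simp_all
  ultimately have "\<bar>(\<integral>y. g y \<partial>Q u) - \<alpha> * g 0\<bar> \<le> ?V - \<alpha> * M"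
    by (simp add: abs_le_iff algebra_simps)
  also have "\<dots> \<le> M - \<alpha> * M + M * weight * (\<theta> * u + K)"
    using integral_Q_weight_le[OF u(1) M] by simp
  finally show ?thesis .
qed


(* If x + x' > R the drift alone contracts; otherwise both Q x and Q x' put mass \<alpha> on the
   common point 0. *)
lemma integral_Q_centered_diff_le:
  assumes x: "0 \<le> x" and x': "0 \<le> x'"
  shows "\<bar>(\<integral>y. g y \<partial>Q x) - (\<integral>y. g y \<partial>Q x')\<bar> \<le> rate * (M * wdist x x')"
proof (cases "x + x' \<le> R")
  case True
  have "\<bar>(\<integral>y. g y \<partial>Q x) - (\<integral>y. g y \<partial>Q x')\<bar>
      \<le> \<bar>(\<integral>y. g y \<partial>Q x) - \<alpha> * g 0\<bar> + \<bar>(\<integral>y. g y \<partial>Q x') - \<alpha> * g 0\<bar>"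
    by simp
  also have "\<dots> \<le> (M - \<alpha> * M + M * weight * (\<theta> * x + K)) + (M - \<alpha> * M + M * weight * (\<theta> * x' + K))"
    using True x x' by (intro add_mono integral_Q_centered_minorized_le) auto
  also have "\<dots> = M * (2 - 2 * \<alpha> + weight * (\<theta> * (x + x') + 2 * K))"
    by (simp add: algebra_simps)
  also have "\<dots> \<le> M * (rate * (2 + weight * (x + x')))"
    using x x' M by (intro mult_left_mono rate_near) auto
  finally show ?thesis
    by (simp add: wdist_def algebra_simps)
next
  case False
  have "\<bar>(\<integral>y. g y \<partial>Q x) - (\<integral>y. g y \<partial>Q x')\<bar> \<le> \<bar>\<integral>y. g y \<partial>Q x\<bar> + \<bar>\<integral>y. g y \<partial>Q x'\<bar>"
    by simp
  also have "\<dots> \<le> (M + M * weight * (\<theta> * x + K)) + (M + M * weight * (\<theta> * x' + K))"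
    using x x' by (intro add_mono integral_Q_centered_le)
  also have "\<dots> = M * (2 + weight * (\<theta> * (x + x') + 2 * K))"
    by (simp add: algebra_simps)
  also have "\<dots> \<le> M * (rate * (2 + weight * (x + x')))"
    using False M by (intro mult_left_mono rate_far) auto
  finally show ?thesis
    by (simp add: wdist_def algebra_simps)
qed

end

(* Only differences of integrals matter, so h may be centred to |h y - c| \<le> M (1 + weight y). *)
lemma integral_Q_contraction:
  assumes h: "h \<in> borel_measurable state_space" and h_bdd: "\<And>y. 0 \<le> y \<Longrightarrow> \<bar>h y\<bar> \<le> B"
    and h_osc: "\<And>z z'. 0 \<le> z \<Longrightarrow> 0 \<le> z' \<Longrightarrow> \<bar>h z - h z'\<bar> \<le> M * wdist z z'"
    and M: "0 \<le> M" and x: "0 \<le> x" and x': "0 \<le> x'"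
  shows "\<bar>(\<integral>y. h y \<partial>Q x) - (\<integral>y. h y \<partial>Q x')\<bar> \<le> rate * (M * wdist x x')"
proof -
  have "\<bar>h z - h z'\<bar> \<le> M * (1 + weight * z) + M * (1 + weight * z')" if "z \<in> {0..}" "z' \<in> {0..}" for z z'
    using h_osc[of z z'] that by (simp add: wdist_def algebra_simps)
  then obtain c where c: "\<And>z. 0 \<le> z \<Longrightarrow> \<bar>h z - c\<bar> \<le> M * (1 + weight * z)"
    using exists_center[of "{0..}" h "\<lambda>z. M * (1 + weight * z)"] by auto
  define g where "g y = h y - c" for y
  have g: "g \<in> borel_measurable state_space" "\<And>y. 0 \<le> y \<Longrightarrow> \<bar>g y\<bar> \<le> B + \<bar>c\<bar>"
    "\<And>y. 0 \<le> y \<Longrightarrow> \<bar>g y\<bar> \<le> M * (1 + weight * y)"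
    using h h_bdd c unfolding g_def by (auto intro: order.trans[OF abs_triangle_ineq4] add_mono)
  have "(\<integral>y. h y \<partial>Q u) = (\<integral>y. g y \<partial>Q u) + c" if "0 \<le> u" for u
  proof -
    interpret prob_space "Q u"
      using prob_space_Q that by simp
    have "integrable (Q u) h"
      using h h_bdd that
      by (intro integrable_const_bound[where B = B]) (auto simp: measurable_cong_sets[OF sets_Q refl])
    then show ?thesis
      by (simp add: g_def prob_space)
  qed
  then show ?thesis
    using integral_Q_centered_diff_le[OF g M x x'] x x' by simp
qed

lemma measure_kernel_pow_diff_le:
  assumes A: "A \<in> sets state_space"
  shows "0 \<le> x \<Longrightarrow> 0 \<le> x' \<Longrightarrow>
    \<bar>measure (kernel_pow Q n x) A - measure (kernel_pow Q n x') A\<bar> \<le> rate ^ n * wdist x x'"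
proof (induction n arbitrary: x x')
  case 0
  have "\<bar>measure (kernel_pow Q 0 x) A - measure (kernel_pow Q 0 x') A\<bar> \<le> 1"
    using measure_kernel_pow_le_1[OF 0(1), of 0 A] measure_kernel_pow_le_1[OF 0(2), of 0 A]
      measure_nonneg[of "kernel_pow Q 0 x" A] measure_nonneg[of "kernel_pow Q 0 x'" A]
    by linarith
  also have "\<dots> \<le> rate ^ 0 * wdist x x'"
    using 0 weight_pos by (simp add: wdist_def)
  finally show ?case .
next
  case (Suc n)
  have "\<bar>(\<integral>y. measure (kernel_pow Q n y) A \<partial>Q x) - (\<integral>y. measure (kernel_pow Q n y) A \<partial>Q x')\<bar>
      \<le> rate * (rate ^ n * wdist x x')"
    using A Suc rate_nonneg measure_kernel_pow_le_1
    by (intro integral_Q_contraction[where B = 1]) auto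
  then show ?case
    using measure_kernel_pow_Suc[OF Suc.prems(1) A] measure_kernel_pow_Suc[OF Suc.prems(2) A]
    by (simp add: mult.assoc)
qed

lemma measure_kernel_pow_0_diff_le:
  assumes A: "A \<in> sets state_space"
  shows "\<bar>measure (kernel_pow Q (k + n) 0) A - measure (kernel_pow Q n 0) A\<bar>
    \<le> rate ^ n * wdist 0 (K / (1 - \<theta>))"
proof -
  interpret P: prob_space "kernel_pow Q k 0"
    using prob_space_kernel_pow by simp
  have [measurable]: "(\<lambda>y. measure (kernel_pow Q n y) A) \<in> borel_measurable (kernel_pow Q k 0)"
    using A by (simp add: measurable_cong_sets[OF sets_kernel_pow refl])
  have int: "integrable (kernel_pow Q k 0) (\<lambda>y. measure (kernel_pow Q n y) A)"
    using measure_kernel_pow_le_1 by (intro P.integrable_const_bound[where B = 1]) auto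
  have int_wdist: "integrable (kernel_pow Q k 0) (\<lambda>y. rate ^ n * wdist y 0)"
    using integrable_kernel_pow_ident by (simp add: wdist_def)
  have "measure (kernel_pow Q (k + n) 0) A - measure (kernel_pow Q n 0) A
      = (\<integral>y. measure (kernel_pow Q n y) A - measure (kernel_pow Q n 0) A \<partial>kernel_pow Q k 0)"
    using measure_kernel_pow_add[of 0 A k n] A int measure_kernel_pow_space[of 0 k] by simp
  also have "\<bar>\<dots>\<bar> \<le> (\<integral>y. rate ^ n * wdist y 0 \<partial>kernel_pow Q k 0)"
    using int int_wdist measure_kernel_pow_diff_le[OF A, of _ 0 n]
    by (intro integral_abs_bound_integral) auto
  also have "\<dots> = rate ^ n * (2 + weight * (\<integral>y. y \<partial>kernel_pow Q k 0))"
    using integrable_kernel_pow_ident measure_kernel_pow_space[of 0 k] by (simp add: wdist_def algebra_simps)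
  also have "\<dots> \<le> rate ^ n * wdist 0 (K / (1 - \<theta>))"
  proof (rule mult_left_mono)
    have "weight * (\<integral>y. y \<partial>kernel_pow Q k 0) \<le> weight * (K / (1 - \<theta>))"
      using integral_kernel_pow_ident_le[of k] weight_pos by (intro mult_left_mono) simp_all
    then show "2 + weight * (\<integral>y. y \<partial>kernel_pow Q k 0) \<le> wdist 0 (K / (1 - \<theta>))"
      by (simp add: wdist_def)
  qed (simp add: rate_nonneg)
  finally show ?thesis .
qed

lemma rate_pow_LIMSEQ: "(\<lambda>n. c * rate ^ n) \<longlonglongrightarrow> 0"
  using tendsto_mult_right_zero[OF LIMSEQ_power_zero[of rate]] rate_nonneg rate_less_1
  by (simp add: mult.commute)

lemma eq_0_if_le_rate_pow:
  assumes "\<And>n. \<bar>d\<bar> \<le> c * rate ^ n"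
  shows "d = 0"
proof -
  have "\<bar>d\<bar> \<le> 0"
    by (rule LIMSEQ_le_const[OF rate_pow_LIMSEQ[of c]]) (use assms in auto)
  then show ?thesis
    by simp
qed

definition lim_measure :: "real set \<Rightarrow> real" where
  "lim_measure A = lim (\<lambda>n. measure (kernel_pow Q n 0) A)"

lemma lim_measure:
  assumes A: "A \<in> sets state_space"
  shows "(\<lambda>n. measure (kernel_pow Q n 0) A) \<longlonglongrightarrow> lim_measure A"
proof -
  have "Cauchy (\<lambda>n. measure (kernel_pow Q n 0) A)"
  proof (rule metric_CauchyI)
    fix e :: real
    assume "0 < e"
    have "\<forall>\<^sub>F n in sequentially. rate ^ n * wdist 0 (K / (1 - \<theta>)) < e / 2"
      using \<open>0 < e\<close> rate_pow_LIMSEQ[of "wdist 0 (K / (1 - \<theta>))"]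
      by (intro order_tendstoD(2)) (auto simp: mult.commute)
    then obtain N where N: "rate ^ N * wdist 0 (K / (1 - \<theta>)) < e / 2"
      by (auto simp: eventually_sequentially)
    have close: "\<bar>measure (kernel_pow Q m 0) A - measure (kernel_pow Q N 0) A\<bar> < e / 2" if "N \<le> m" for m
      using measure_kernel_pow_0_diff_le[OF A, of "m - N" N] that N by simp
    show "\<exists>M. \<forall>m\<ge>M. \<forall>n\<ge>M. dist (measure (kernel_pow Q m 0) A) (measure (kernel_pow Q n 0) A) < e"
    proof (intro exI allI impI)
      fix m n
      assume "N \<le> m" "N \<le> n"
      then show "dist (measure (kernel_pow Q m 0) A) (measure (kernel_pow Q n 0) A) < e"
        using close[of m] close[of n] unfolding dist_real_def by linarith
    qed
  qed
  then show ?thesis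
    unfolding lim_measure_def by (simp add: Cauchy_convergent_iff convergent_LIMSEQ_iff)
qed

lemma measure_kernel_pow_0_lim_measure_le:
  assumes A: "A \<in> sets state_space"
  shows "\<bar>measure (kernel_pow Q n 0) A - lim_measure A\<bar> \<le> rate ^ n * wdist 0 (K / (1 - \<theta>))"
proof -
  have "(\<lambda>k. \<bar>measure (kernel_pow Q (k + n) 0) A - measure (kernel_pow Q n 0) A\<bar>)
      \<longlonglongrightarrow> \<bar>lim_measure A - measure (kernel_pow Q n 0) A\<bar>"
    using LIMSEQ_ignore_initial_segment[OF lim_measure[OF A], of n] by (intro tendsto_intros) simp
  then have "\<bar>lim_measure A - measure (kernel_pow Q n 0) A\<bar> \<le> rate ^ n * wdist 0 (K / (1 - \<theta>))"
    by (rule LIMSEQ_le_const2) (use measure_kernel_pow_0_diff_le[OF A] in auto)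
  then show ?thesis
    by simp
qed

lemma lim_measure_nonneg: "A \<in> sets state_space \<Longrightarrow> 0 \<le> lim_measure A"
  using LIMSEQ_le_const[OF lim_measure, of A 0] by auto

lemma lim_measure_space: "lim_measure {0..} = 1"
proof -
  have "(\<lambda>n. measure (kernel_pow Q n 0) {0..}) \<longlonglongrightarrow> lim_measure {0..}"
    by (rule lim_measure) (simp add: sets_state_space_iff)
  then have "(\<lambda>n. 1) \<longlonglongrightarrow> lim_measure {0..}"
    by (simp add: measure_kernel_pow_space)
  then show ?thesis
    using LIMSEQ_unique[OF tendsto_const] by metis
qed

lemma lim_measure_Un:
  assumes A: "A \<in> sets state_space" and B: "B \<in> sets state_space" and "A \<inter> B = {}"
  shows "lim_measure (A \<union> B) = lim_measure A + lim_measure B"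
proof -
  have "measure (kernel_pow Q n 0) (A \<union> B) = measure (kernel_pow Q n 0) A + measure (kernel_pow Q n 0) B" for n
  proof -
    interpret prob_space "kernel_pow Q n 0"
      using prob_space_kernel_pow by simp
    show ?thesis
      using assms by (intro finite_measure_Union) auto
  qed
  then have "(\<lambda>n. measure (kernel_pow Q n 0) (A \<union> B)) \<longlonglongrightarrow> lim_measure A + lim_measure B"
    using tendsto_add[OF lim_measure[OF A] lim_measure[OF B]] by simp
  then show ?thesis
    using lim_measure[of "A \<union> B"] A B LIMSEQ_unique by blast
qed

lemma lim_measure_decseq:
  assumes A: "range A \<subseteq> sets state_space" and "decseq A" and "(\<Inter>i. A i) = {}"
  shows "(\<lambda>i. lim_measure (A i)) \<longlonglongrightarrow> 0"
proof (rule LIMSEQ_I)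
  fix r :: real
  assume "0 < r"
  have "\<forall>\<^sub>F n in sequentially. rate ^ n * wdist 0 (K / (1 - \<theta>)) < r / 2"
    using \<open>0 < r\<close> rate_pow_LIMSEQ[of "wdist 0 (K / (1 - \<theta>))"]
    by (intro order_tendstoD(2)) (auto simp: mult.commute)
  then obtain n where n: "rate ^ n * wdist 0 (K / (1 - \<theta>)) < r / 2"
    by (auto simp: eventually_sequentially)
  interpret P: prob_space "kernel_pow Q n 0"
    using prob_space_kernel_pow by simp
  have "(\<lambda>i. measure (kernel_pow Q n 0) (A i)) \<longlonglongrightarrow> measure (kernel_pow Q n 0) (\<Inter>i. A i)"
    using assms by (intro P.finite_Lim_measure_decseq) auto
  then have "(\<lambda>i. measure (kernel_pow Q n 0) (A i)) \<longlonglongrightarrow> 0"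
    using assms(3) by simp
  then have "\<forall>\<^sub>F i in sequentially. measure (kernel_pow Q n 0) (A i) < r / 2"
    using \<open>0 < r\<close> by (intro order_tendstoD(2)) auto
  then obtain N where N: "\<And>i. N \<le> i \<Longrightarrow> measure (kernel_pow Q n 0) (A i) < r / 2"
    by (auto simp: eventually_sequentially)
  have "norm (lim_measure (A i) - 0) < r" if "N \<le> i" for i
    using N[OF that] n measure_kernel_pow_0_lim_measure_le[of "A i" n] lim_measure_nonneg[of "A i"] A
    by auto
  then show "\<exists>N. \<forall>i\<ge>N. norm (lim_measure (A i) - 0) < r"
    by blast
qed

lemma measure_space_lim_measure:
  "measure_space {0..} (sets state_space) (\<lambda>A. ennreal (lim_measure A))"
proof -
  have sa: "sigma_algebra {0..} (sets state_space)"
    using sets.sigma_algebra_axioms[of state_space] by simp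
  then have ring: "ring_of_sets {0..} (sets state_space)"
    by (simp add: sigma_algebra_def algebra_def)
  have pos: "positive (sets state_space) (\<lambda>A. ennreal (lim_measure A))"
    using lim_measure_Un[of "{}" "{}"] by (simp add: positive_def)
  have "additive (sets state_space) (\<lambda>A. ennreal (lim_measure A))"
    using lim_measure_Un lim_measure_nonneg by (auto simp: additive_def ennreal_plus)
  moreover have "(\<lambda>i. ennreal (lim_measure (A i))) \<longlonglongrightarrow> 0"
    if "range A \<subseteq> sets state_space" "decseq A" "(\<Inter>i. A i) = {}" for A
    using tendsto_ennrealI[OF lim_measure_decseq[OF that]] by simp
  ultimately have "countably_additive (sets state_space) (\<lambda>A. ennreal (lim_measure A))"
    by (intro ring_of_sets.empty_continuous_imp_countably_additive[OF ring pos]) auto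
  then show ?thesis
    using sa pos by (simp add: measure_space_def)
qed

definition stationary :: "real measure" where
  "stationary = measure_of {0..} (sets state_space) (\<lambda>A. ennreal (lim_measure A))"

lemma sets_stationary [simp]: "sets stationary = sets state_space"
  unfolding stationary_def using sets.space_closed[of state_space] sets.sigma_sets_eq[of state_space]
  by simp

lemma space_stationary [simp]: "space stationary = {0..}"
  using sets_eq_imp_space_eq[OF sets_stationary] by simp

lemma emeasure_stationary: "A \<in> sets state_space \<Longrightarrow> emeasure stationary A = ennreal (lim_measure A)"
  using measure_space_lim_measure unfolding stationary_def measure_space_def
  by (intro emeasure_measure_of_sigma) auto

lemma measure_stationary: "A \<in> sets state_space \<Longrightarrow> measure stationary A = lim_measure A"
  using emeasure_stationary lim_measure_nonneg by (simp add: measure_def)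

lemma prob_space_stationary: "prob_space stationary"
  using emeasure_stationary[of "{0..}"] lim_measure_space
  by (intro prob_spaceI) (simp add: sets_state_space_iff)

lemma measure_kernel_pow_stationary_le:
  assumes A: "A \<in> sets state_space" and w: "0 \<le> w"
  shows "\<bar>measure (kernel_pow Q n w) A - measure stationary A\<bar>
    \<le> (wdist w 0 + wdist 0 (K / (1 - \<theta>))) * rate ^ n"
  using measure_kernel_pow_diff_le[OF A w, of 0 n] measure_kernel_pow_0_lim_measure_le[OF A, of n]
  by (simp add: measure_stationary[OF A] algebra_simps)

lemma measure_stationary_eq_integral:
  assumes A: "A \<in> sets state_space"
  shows "measure stationary A = (\<integral>y. measure (Q y) A \<partial>stationary)"
proof (rule eq_iff_diff_eq_0[THEN iffD2], rule eq_0_if_le_rate_pow[where c = "2 * wdist 0 (K / (1 - \<theta>))"])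
  fix n
  let ?C = "wdist 0 (K / (1 - \<theta>))"
  have [measurable]: "(\<lambda>y. measure (Q y) A) \<in> borel_measurable (kernel_pow Q n 0)"
    using A by (simp add: measurable_cong_sets[OF sets_kernel_pow refl])
  \<comment> \<open>\<mu> Q is approximated by Q^n(0, .) Q = Q^(n+1)(0, .), just as \<mu> is by Q^n(0, .)\<close>
  have "\<bar>(\<integral>y. measure (Q y) A \<partial>kernel_pow Q n 0) - (\<integral>y. measure (Q y) A \<partial>stationary)\<bar> \<le> rate ^ n * ?C"
    using measure_kernel_pow_0_lim_measure_le measure_stationary measure_Q_le_1
    by (intro integral_diff_le_of_measure_diff_le[OF prob_space_kernel_pow prob_space_stationary]) auto
  moreover have "\<bar>measure (kernel_pow Q (Suc n) 0) A - measure stationary A\<bar> \<le> rate ^ Suc n * ?C"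
    using measure_kernel_pow_0_lim_measure_le[OF A, of "Suc n"] measure_stationary[OF A]
    by (simp del: kernel_pow.simps)
  moreover have "rate ^ Suc n * ?C \<le> rate ^ n * ?C"
    using rate_nonneg rate_less_1 wdist_pos[of 0 "K / (1 - \<theta>)"] K \<theta>
    by (intro mult_right_mono) (auto intro: mult_left_le_one_le)
  ultimately show "\<bar>measure stationary A - (\<integral>y. measure (Q y) A \<partial>stationary)\<bar> \<le> 2 * ?C * rate ^ n"
    using measure_kernel_pow_Suc'[of 0 A n] A by (simp add: algebra_simps del: kernel_pow.simps)
qed

lemma invariant_stationary: "invariant stationary"
proof -
  interpret S: prob_space stationary
    by (rule prob_space_stationary)
  have "emeasure stationary A = (\<integral>\<^sup>+w. emeasure (Q w) A \<partial>stationary)" if A: "A \<in> sets state_space" for A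
  proof -
    have "(\<integral>\<^sup>+w. emeasure (Q w) A \<partial>stationary) = ennreal (\<integral>w. measure (Q w) A \<partial>stationary)"
      using A prob_space_Q
      by (intro nn_integral_emeasure_eq_integral_measure[OF prob_space_stationary measurable_Q_cong]) simp_all
    then show ?thesis
      using measure_stationary_eq_integral[OF A] S.emeasure_eq_measure by simp
  qed
  then show ?thesis
    using prob_space_stationary by (simp add: invariant_def)
qed

lemma measure_kernel_pow_LIMSEQ_stationary:
  assumes "A \<in> sets state_space" "0 \<le> w"
  shows "(\<lambda>n. measure (kernel_pow Q n w) A) \<longlonglongrightarrow> measure stationary A"
proof -
  have "\<forall>\<^sub>F n in sequentially. norm (measure (kernel_pow Q n w) A - measure stationary A)
      \<le> (wdist w 0 + wdist 0 (K / (1 - \<theta>))) * rate ^ n"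
    using measure_kernel_pow_stationary_le[OF assms] by simp
  then have "(\<lambda>n. measure (kernel_pow Q n w) A - measure stationary A) \<longlonglongrightarrow> 0"
    by (rule Lim_null_comparison[OF _ rate_pow_LIMSEQ])
  then show ?thesis
    by (simp add: LIM_zero_iff)
qed

lemma invariant_eq_stationary:
  assumes "invariant \<nu>"
  shows "\<nu> = stationary"
proof (rule measure_eqI)
  have sets_\<nu>: "sets \<nu> = sets state_space" and "prob_space \<nu>"
    using assms by (simp_all add: invariant_def)
  interpret \<nu>: prob_space \<nu> by fact
  interpret S: prob_space stationary
    by (rule prob_space_stationary)
  have space_\<nu>: "space \<nu> = {0..}"
    using sets_eq_imp_space_eq[OF sets_\<nu>] by simp
  show "sets \<nu> = sets stationary"
    using sets_\<nu> by simp
  fix A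
  assume "A \<in> sets \<nu>"
  then have A: "A \<in> sets state_space"
    using sets_\<nu> by simp
  \<comment> \<open>\<nu>(A) = \<integral> Q^n(w, A) d\<nu>(w) for all n, and the integrands converge boundedly to \<mu>(A)\<close>
  have "(\<lambda>n. \<integral>w. measure (kernel_pow Q n w) A \<partial>\<nu>) \<longlonglongrightarrow> (\<integral>w. measure stationary A \<partial>\<nu>)"
  proof (rule integral_dominated_convergence[where w = "\<lambda>_. 1"])
    show "(\<lambda>w. measure (kernel_pow Q n w) A) \<in> borel_measurable \<nu>" for n
      using A by (simp add: measurable_cong_sets[OF sets_\<nu> refl])
    show "AE w in \<nu>. norm (measure (kernel_pow Q n w) A) \<le> 1" for n
      using space_\<nu> measure_kernel_pow_le_1 by (intro AE_I2) auto
    show "AE w in \<nu>. (\<lambda>n. measure (kernel_pow Q n w) A) \<longlonglongrightarrow> measure stationary A"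
      using space_\<nu> A by (intro AE_I2 measure_kernel_pow_LIMSEQ_stationary) auto
  qed auto
  then have "(\<lambda>n. measure \<nu> A) \<longlonglongrightarrow> measure stationary A"
    using invariant_measure_kernel_pow[OF assms A] \<nu>.prob_space by simp
  then have "measure \<nu> A = measure stationary A"
    using LIMSEQ_const_iff by blast
  then show "emeasure \<nu> A = emeasure stationary A"
    using \<nu>.emeasure_eq_measure S.emeasure_eq_measure by simp
qed

lemma measure_Q_0_ge:
  assumes y: "0 \<le> y"
  shows "\<alpha> - \<alpha> / R * y \<le> measure (Q y) {0}"
proof (cases "y \<le> R")
  case True
  interpret prob_space "Q y"
    using prob_space_Q y by simp
  have "\<alpha> \<le> measure (Q y) {0}"
    using minorization[OF y True] emeasure_eq_measure by simp
  moreover have "0 \<le> \<alpha> / R * y"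
    using \<alpha> R_pos y by simp
  ultimately show ?thesis
    by linarith
next
  case False
  then have "\<alpha> / R * R \<le> \<alpha> / R * y"
    using \<alpha> R_pos by (intro mult_left_mono) auto
  then have "\<alpha> - \<alpha> / R * y \<le> 0"
    using R_pos by simp
  then show ?thesis
    using measure_nonneg[of "Q y" "{0}"] by linarith
qed

lemma emeasure_stationary_0_pos: "0 < emeasure stationary {0}"
proof -
  define c where "c = \<alpha> - \<alpha> / R * (K / (1 - \<theta>))"
  have "K / (1 - \<theta>) < R"
    using R K \<theta> by (smt (verit) divide_strict_right_mono)
  then have "\<alpha> / R * (K / (1 - \<theta>)) < \<alpha> / R * R"
    using \<alpha> R_pos by (intro mult_strict_left_mono) auto
  then have c: "0 < c"
    using R_pos by (simp add: c_def)
  have zero: "{0} \<in> sets state_space"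
    by (simp add: sets_state_space_iff)
  \<comment> \<open>integrate measure_Q_0_ge against Q^k(0, .), whose mean is at most K / (1 - \<theta>)\<close>
  have "c \<le> measure (kernel_pow Q (Suc k) 0) {0}" for k
  proof -
    interpret P: prob_space "kernel_pow Q k 0"
      using prob_space_kernel_pow by simp
    have [measurable]: "(\<lambda>y. measure (Q y) {0}) \<in> borel_measurable (kernel_pow Q k 0)"
      using zero by (simp add: measurable_cong_sets[OF sets_kernel_pow refl])
    have "c \<le> \<alpha> - \<alpha> / R * (\<integral>y. y \<partial>kernel_pow Q k 0)"
      unfolding c_def using integral_kernel_pow_ident_le[of k] \<alpha> R_pos
      by (intro diff_left_mono mult_left_mono) auto
    also have "\<dots> = (\<integral>y. \<alpha> - \<alpha> / R * y \<partial>kernel_pow Q k 0)"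
      using integrable_kernel_pow_ident[of k] measure_kernel_pow_space[of 0 k] by simp
    also have "\<dots> \<le> (\<integral>y. measure (Q y) {0} \<partial>kernel_pow Q k 0)"
      proof (rule integral_mono)
      show "integrable (kernel_pow Q k 0) (\<lambda>y. \<alpha> - \<alpha> / R * y)"
        using integrable_kernel_pow_ident[of k] by simp
      show "integrable (kernel_pow Q k 0) (\<lambda>y. measure (Q y) {0})"
        using measure_Q_le_1 by (intro P.integrable_const_bound[where B = 1]) auto
      show "\<alpha> - \<alpha> / R * y \<le> measure (Q y) {0}" if "y \<in> space (kernel_pow Q k 0)" for y
        using that by (intro measure_Q_0_ge) simp
    qed
    finally show ?thesis
      using measure_kernel_pow_Suc'[of 0 "{0}" k] zero by simp
  qed
  then have "c \<le> lim_measure {0}"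
    using LIMSEQ_Suc[OF lim_measure[OF zero]] by (intro LIMSEQ_le_const) auto
  then show ?thesis
    using c emeasure_stationary[OF zero] by simp
qed

end

lemma sets_ref_meas [simp]: "sets ref_meas = sets state_space"
  unfolding ref_meas_def using sets.space_closed[of state_space] sets.sigma_sets_eq[of state_space]
  by simp

lemma emeasure_ref_meas:
  assumes "A \<in> sets state_space"
  shows "emeasure ref_meas A = indicator A 0 + emeasure lborel A"
  unfolding ref_meas_def
proof (rule emeasure_measure_of_sigma[OF _ _ _ assms])
  show "sigma_algebra {0..} (sets state_space)"
    using sets.sigma_algebra_axioms[of state_space] by simp
  show "positive (sets state_space) (\<lambda>A. indicator A 0 + emeasure lborel A)"
    by (simp add: positive_def)
  show "countably_additive (sets state_space) (\<lambda>A. indicator A 0 + emeasure lborel A)"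
    unfolding countably_additive_def
  proof (intro allI impI)
    fix F :: "nat \<Rightarrow> real set"
    assume F: "range F \<subseteq> sets state_space" "disjoint_family F" "\<Union> (range F) \<in> sets state_space"
    then have "(\<Sum>i. emeasure lborel (F i)) = emeasure lborel (\<Union> (range F))"
      by (intro suminf_emeasure) (auto simp: sets_state_space_iff)
    then show "(\<Sum>i. indicator (F i) 0 + emeasure lborel (F i)) = indicator (\<Union> (range F)) 0 + emeasure lborel (\<Union> (range F))"
      using suminf_indicator[OF F(2)] by (simp add: suminf_add[symmetric])
  qed
qed

lemma null_sets_ref_meas_iff:
  "B \<in> null_sets ref_meas \<longleftrightarrow> B \<in> sets state_space \<and> 0 \<notin> B \<and> emeasure lborel B = 0"
  by (auto simp: null_sets_def emeasure_ref_meas)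

lemma absolutely_continuous_step_law:
  assumes "\<sigma> > 0" "\<gamma> > 0"
  shows "absolutely_continuous ref_meas (step_law \<sigma> \<gamma> a)"
  unfolding absolutely_continuous_def
proof
  fix B
  assume "B \<in> null_sets ref_meas"
  then have "B \<in> sets state_space" "0 \<notin> B" "emeasure lborel B = 0"
    by (simp_all add: null_sets_ref_meas_iff)
  then show "B \<in> null_sets (step_law \<sigma> \<gamma> a)"
    using emeasure_step_law_eq_0[OF assms] by (simp add: null_sets_def)
qed

lemma absolutely_continuous_ref_meas_if_atom:
  assumes "sets \<mu> = sets state_space" "0 < emeasure \<mu> {0}"
    and "absolutely_continuous \<mu> (step_law \<sigma> \<gamma> a)" and "\<sigma> > 0" "\<gamma> > 0" "0 < a"
  shows "absolutely_continuous \<mu> ref_meas"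
  unfolding absolutely_continuous_def
proof
  fix B
  assume B: "B \<in> null_sets \<mu>"
  then have "0 \<notin> B"
    using assms(1,2) emeasure_mono[of "{0}" B \<mu>] by (auto simp: null_sets_def)
  moreover have "B \<in> null_sets (step_law \<sigma> \<gamma> a)"
    using B assms(3) by (auto simp: absolutely_continuous_def)
  then have "emeasure lborel B = 0"
    using emeasure_lborel_eq_0_if_step_law[OF assms(4-6)] by (simp add: null_sets_def)
  moreover have "B \<in> sets state_space"
    using B assms(1) by auto
  ultimately show "B \<in> null_sets ref_meas"
    by (simp add: null_sets_ref_meas_iff)
qed

locale Qmeas_harris_chain = harris_chain +
  fixes \<sigma> c :: real and \<tau> :: "real \<Rightarrow> real \<Rightarrow> real" and \<gamma> :: real
  assumes Qmeas_eq: "\<And>w. 0 \<le> w \<Longrightarrow> Qmeas \<sigma> c \<tau> \<gamma> w = Q w"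
begin

lemma invariant_prob_iff_invariant: "invariant_prob \<sigma> c \<tau> \<gamma> \<nu> \<longleftrightarrow> invariant \<nu>"
proof -
  have "(\<integral>\<^sup>+w. emeasure (Qmeas \<sigma> c \<tau> \<gamma> w) A \<partial>\<nu>) = (\<integral>\<^sup>+w. emeasure (Q w) A \<partial>\<nu>)"
    if "sets \<nu> = sets state_space" for A
    using sets_eq_imp_space_eq[OF that] by (intro nn_integral_cong) (simp add: Qmeas_eq)
  then show ?thesis
    unfolding invariant_prob_def invariant_def by auto
qed

lemma invariant_prob_stationary: "invariant_prob \<sigma> c \<tau> \<gamma> stationary"
  using invariant_stationary by (simp add: invariant_prob_iff_invariant)

lemma invariant_prob_eq_stationary: "invariant_prob \<sigma> c \<tau> \<gamma> \<nu> \<Longrightarrow> \<nu> = stationary"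
  using invariant_eq_stationary by (simp add: invariant_prob_iff_invariant)

lemma Qpow_eq_measure_kernel_pow:
  assumes "B \<in> sets state_space"
  shows "0 \<le> w \<Longrightarrow> Qpow \<sigma> c \<tau> \<gamma> n w B = measure (kernel_pow Q n w) B"
proof (induction n arbitrary: w)
  case (Suc n)
  have "Qpow \<sigma> c \<tau> \<gamma> (Suc n) w B = (\<integral>y. Qpow \<sigma> c \<tau> \<gamma> n y B \<partial>Q w)"
    using Suc.prems by (simp add: Qmeas_eq)
  also have "\<dots> = (\<integral>y. measure (kernel_pow Q n y) B \<partial>Q w)"
    using Suc.prems by (intro Bochner_Integration.integral_cong) (simp_all add: Suc.IH)
  finally show ?case
    using measure_kernel_pow_Suc[OF Suc.prems assms] by simp
qed (use assms in \<open>simp add: measure_return\<close>)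

lemma geom_ergodic_stationary: "geom_ergodic \<sigma> c \<tau> \<gamma> stationary"
  unfolding geom_ergodic_def
proof (intro exI[of _ rate] conjI exI[of _ "\<lambda>w. wdist w 0 + wdist 0 (K / (1 - \<theta>))"] allI impI
    rate_nonneg rate_less_1)
  fix w :: real and n
  assume "0 \<le> w"
  then show "tv_dist \<sigma> c \<tau> \<gamma> stationary n w \<le> (wdist w 0 + wdist 0 (K / (1 - \<theta>))) * rate ^ n"
    unfolding tv_dist_def
    using Qpow_eq_measure_kernel_pow measure_kernel_pow_stationary_le
    by (intro cSUP_least) auto
qed

end

lemma affine_bound_of_ratio_bounds:
  fixes f :: "real \<Rightarrow> real"
  assumes nonneg: "\<And>r. 0 \<le> r \<Longrightarrow> 0 \<le> f r" and "f 0 = 0" and "0 \<le> R1" and "0 \<le> A"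
    and ratio: "\<And>r. 0 < r \<Longrightarrow> f r / r \<le> A" and ratio_far: "\<And>r. R1 < r \<Longrightarrow> f r / r \<le> \<theta>"
  shows "0 \<le> \<theta>" and "\<And>x. 0 \<le> x \<Longrightarrow> f x \<le> \<theta> * x + A * R1"
proof -
  have "0 \<le> f (R1 + 1) / (R1 + 1)"
    using nonneg[of "R1 + 1"] \<open>0 \<le> R1\<close> by simp
  then show "0 \<le> \<theta>"
    using ratio_far[of "R1 + 1"] by linarith
  fix x :: real
  assume "0 \<le> x"
  show "f x \<le> \<theta> * x + A * R1"
  proof (cases "x = 0")
    case False
    then have x: "0 < x"
      using \<open>0 \<le> x\<close> by simp
    show ?thesis
    proof (cases "x \<le> R1")
      case True
      have "f x \<le> A * x"
        using ratio[OF x] x by (simp add: divide_le_eq mult.commute)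
      also have "\<dots> \<le> A * R1"
        using True \<open>0 \<le> A\<close> by (rule mult_left_mono)
      finally show ?thesis
        using \<open>0 \<le> \<theta>\<close> x by (smt (verit) mult_nonneg_nonneg)
    next
      case False
      then have "f x \<le> \<theta> * x"
        using ratio_far[of x] x by (simp add: divide_le_eq mult.commute)
      then show ?thesis
        using \<open>0 \<le> R1\<close> \<open>0 \<le> A\<close> by (smt (verit) mult_nonneg_nonneg)
    qed
  qed (use assms \<open>0 \<le> \<theta>\<close> in simp)
qed

lemma harris_chain_step_law:
  assumes \<sigma>: "\<sigma> > 0" and \<gamma>: "\<gamma> > 0" and a: "a \<in> borel_measurable state_space"
    and a_nonneg: "\<And>w. 0 \<le> w \<Longrightarrow> 0 \<le> a w"
    and a_le: "\<And>w. 0 \<le> w \<Longrightarrow> a w + 2 * \<sigma> * sqrt \<gamma> \<le> \<theta> * w + K"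
    and \<theta>: "0 \<le> \<theta>" "\<theta> < 1" and K: "0 < K"
  shows "\<exists>R \<alpha>. harris_chain (\<lambda>w. step_law \<sigma> \<gamma> (a w)) \<theta> K R \<alpha>"
proof -
  define R where "R = 2 * K / (1 - \<theta>) + 1"
  define t where "t = (\<theta> * R + K) / (2 * \<sigma> * sqrt \<gamma>)"
  have "0 < R"
    using K \<theta> by (simp add: R_def add_pos_nonneg)
  then have t: "0 \<le> t" and t_eq: "2 * \<sigma> * sqrt \<gamma> * t = \<theta> * R + K"
    using \<sigma> \<gamma> \<theta> K by (simp_all add: t_def)
  have "harris_chain (\<lambda>w. step_law \<sigma> \<gamma> (a w)) \<theta> K R (phi (t + 1))"
  proof (intro harris_chain.intro state_kernel.intro harris_chain_axioms.intro)
    show "(\<lambda>w. step_law \<sigma> \<gamma> (a w)) \<in> state_space \<rightarrow>\<^sub>M subprob_algebra state_space"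
      using measurable_compose[OF a step_law_measurable[OF \<sigma> \<gamma>]] .
    show "prob_space (step_law \<sigma> \<gamma> (a w))" for w
      using \<sigma> \<gamma> by (rule prob_space_step_law)
    show "(\<integral>\<^sup>+y. ennreal y \<partial>step_law \<sigma> \<gamma> (a w)) \<le> ennreal (\<theta> * w + K)" if "0 \<le> w" for w
      using nn_integral_step_law_ident_le[OF \<sigma> \<gamma> a_nonneg[OF that]] ennreal_leI[OF a_le[OF that]]
      by (rule order.trans)
    show "ennreal (phi (t + 1)) \<le> emeasure (step_law \<sigma> \<gamma> (a w)) {0}" if "0 \<le> w" "w \<le> R" for w
    proof (rule emeasure_step_law_0_ge[OF \<sigma> \<gamma> a_nonneg[OF that(1)] t])
      have "a w \<le> \<theta> * w + K"
        using a_le[OF that(1)] \<sigma> \<gamma> by (smt (verit) mult_nonneg_nonneg real_sqrt_ge_zero)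
      also have "\<dots> \<le> \<theta> * R + K"
        using that \<theta> by (simp add: mult_left_mono)
      finally show "a w \<le> 2 * \<sigma> * sqrt \<gamma> * t"
        using t_eq by simp
    qed
    show "2 * K / (1 - \<theta>) < R"
      by (simp add: R_def)
  qed (use \<theta> K phi_pos in simp_all)
  then show ?thesis
    by blast
qed

lemma harris_chain_Q_gamma:
  assumes "\<sigma> > 0" "0 \<le> c" "0 < \<gamma>"
    and f_nonneg: "\<And>r. 0 \<le> r \<Longrightarrow> 0 \<le> f r" and "mono_on {0..} f" and "f 0 = 0"
    and "0 \<le> R1" "0 \<le> L" "0 < m"
    and ratio: "\<And>r. 0 < r \<Longrightarrow> f r / r \<le> 1 + \<gamma> * L"
    and ratio_far: "\<And>r. R1 < r \<Longrightarrow> f r / r \<le> 1 - \<gamma> * m"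
  shows "\<exists>\<theta> K R \<alpha>. harris_chain (\<lambda>w. step_law \<sigma> \<gamma> (f w + \<gamma> * c)) \<theta> K R \<alpha>"
proof -
  define \<theta> where "\<theta> = 1 - \<gamma> * m"
  define K where "K = (1 + \<gamma> * L) * R1 + \<gamma> * c + 2 * \<sigma> * sqrt \<gamma> + 1"
    \<comment> \<open>the summand 1 only serves to make K positive\<close>
  have L: "0 \<le> 1 + \<gamma> * L"
    using assms by simp
  have \<theta>_nonneg: "0 \<le> \<theta>" and f_le: "\<And>w. 0 \<le> w \<Longrightarrow> f w \<le> \<theta> * w + (1 + \<gamma> * L) * R1"
    using affine_bound_of_ratio_bounds[of f R1 "1 + \<gamma> * L" \<theta>,
        OF f_nonneg \<open>f 0 = 0\<close> \<open>0 \<le> R1\<close> L ratio ratio_far[folded \<theta>_def]]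
    by simp_all
  have "0 \<le> (1 + \<gamma> * L) * R1" "0 \<le> \<gamma> * c" "0 \<le> 2 * \<sigma> * sqrt \<gamma>"
    using assms L by simp_all
  then have "0 < K"
    unfolding K_def by linarith
  have "\<exists>R \<alpha>. harris_chain (\<lambda>w. step_law \<sigma> \<gamma> (f w + \<gamma> * c)) \<theta> K R \<alpha>"
  proof (rule harris_chain_step_law[OF \<open>\<sigma> > 0\<close> \<open>0 < \<gamma>\<close>])
    show "(\<lambda>w. f w + \<gamma> * c) \<in> borel_measurable state_space"
      using borel_measurable_mono_on_fnc[OF \<open>mono_on {0..} f\<close>] by (simp add: state_space_def)
    show "0 \<le> f w + \<gamma> * c" if "0 \<le> w" for w
      using f_nonneg[OF that] assms by simp
    show "f w + \<gamma> * c + 2 * \<sigma> * sqrt \<gamma> \<le> \<theta> * w + K" if "0 \<le> w" for w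
      using f_le[OF that] by (simp add: K_def)
    show "\<theta> < 1"
      using assms by (simp add: \<theta>_def)
  qed fact+
  then show ?thesis
    by blast
qed

theorem proposition9:
  fixes \<sigma> \<gamma>bar c_inf :: real and \<tau> :: "real \<Rightarrow> real \<Rightarrow> real"
  assumes "\<sigma> > 0" and "\<gamma>bar > 0" and "c_inf \<ge> 0"
    and tau_maps: "\<And>\<gamma> r. 0 < \<gamma> \<Longrightarrow> \<gamma> \<le> \<gamma>bar \<Longrightarrow> r \<ge> 0 \<Longrightarrow> \<tau> \<gamma> r \<ge> 0"
    and tau_mono: "\<And>\<gamma>. 0 < \<gamma> \<Longrightarrow> \<gamma> \<le> \<gamma>bar \<Longrightarrow> mono_on {0..} (\<tau> \<gamma>)"
    and tau_zero: "\<And>\<gamma>. 0 < \<gamma> \<Longrightarrow> \<gamma> \<le> \<gamma>bar \<Longrightarrow> \<tau> \<gamma> 0 = 0"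
    and contr: "\<exists>R1 L m. R1 \<ge> 0 \<and> L \<ge> 0 \<and> m > 0 \<and>
        (\<forall>\<gamma>. 0 < \<gamma> \<and> \<gamma> \<le> \<gamma>bar \<longrightarrow>
           (\<forall>r > 0. \<tau> \<gamma> r / r \<le> 1 + \<gamma> * L) \<and>
           (\<forall>r > R1. \<tau> \<gamma> r / r \<le> 1 - \<gamma> * m))"
  shows "\<forall>\<gamma>. 0 < \<gamma> \<and> \<gamma> \<le> \<gamma>bar \<longrightarrow>
     (\<exists>\<mu>. invariant_prob \<sigma> c_inf \<tau> \<gamma> \<mu>
        \<and> (\<forall>\<nu>. invariant_prob \<sigma> c_inf \<tau> \<gamma> \<nu> \<longrightarrow> \<nu> = \<mu>)
        \<and> geom_ergodic \<sigma> c_inf \<tau> \<gamma> \<mu>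
        \<and> emeasure \<mu> {0} > 0
        \<and> absolutely_continuous ref_meas \<mu>
        \<and> (c_inf \<noteq> 0 \<longrightarrow> absolutely_continuous \<mu> ref_meas))"
proof (intro allI impI, goal_cases)
  case (1 \<gamma>)
  then have \<gamma>: "0 < \<gamma>" "\<gamma> \<le> \<gamma>bar"
    by auto
  define Q where "Q w = step_law \<sigma> \<gamma> (\<tau> \<gamma> w + \<gamma> * c_inf)" for w
  from contr obtain R1 L m where "0 \<le> R1" "0 \<le> L" "0 < m"
    and "\<forall>\<gamma>. 0 < \<gamma> \<and> \<gamma> \<le> \<gamma>bar \<longrightarrow>
       (\<forall>r > 0. \<tau> \<gamma> r / r \<le> 1 + \<gamma> * L) \<and> (\<forall>r > R1. \<tau> \<gamma> r / r \<le> 1 - \<gamma> * m)"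
    by (elim exE conjE)
  then obtain \<theta> K R \<alpha> where "harris_chain Q \<theta> K R \<alpha>"
    using harris_chain_Q_gamma[OF assms(1,3) \<gamma>(1) tau_maps[OF \<gamma>] tau_mono[OF \<gamma>] tau_zero[OF \<gamma>]
        \<open>0 \<le> R1\<close> \<open>0 \<le> L\<close> \<open>0 < m\<close>] \<gamma> unfolding Q_def by blast
  then interpret harris_chain Q \<theta> K R \<alpha> .
  interpret Qmeas_harris_chain Q \<theta> K R \<alpha> \<sigma> c_inf \<tau> \<gamma>
    using assms(1,3) \<gamma> tau_maps[OF \<gamma>]
    by (intro Qmeas_harris_chain.intro Qmeas_harris_chain_axioms.intro \<open>harris_chain Q \<theta> K R \<alpha>\<close>)
       (simp add: Q_def Qmeas_eq_step_law)
  have "absolutely_continuous ref_meas stationary"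
    using absolutely_continuous_step_law[OF assms(1) \<gamma>(1)]
    by (intro invariant_absolutely_continuous[OF invariant_stationary]) (simp_all add: Q_def)
  moreover have "absolutely_continuous stationary ref_meas" if "c_inf \<noteq> 0"
    using absolutely_continuous_Q_0[OF invariant_stationary emeasure_stationary_0_pos] that assms(1,3) \<gamma>
    by (intro absolutely_continuous_ref_meas_if_atom[where \<sigma> = \<sigma> and \<gamma> = \<gamma> and a = "\<gamma> * c_inf",
          OF _ emeasure_stationary_0_pos])
       (simp_all add: Q_def tau_zero)
  ultimately show ?case
    using invariant_prob_stationary invariant_prob_eq_stationary geom_ergodic_stationary
      emeasure_stationary_0_pos by blast
qed

end
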